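(* Let $\lambda>0$, $\ell>0$ and let $n<m$ be positive integers. Then $\mathcal{E}_\lambda[\gamma_{\rm sarc}^{\lambda,\ell,n}]<\mathcal{E}_\lambda[\gamma_{\rm sarc}^{\lambda,\ell,m}]$ and $\mathcal{E}_\lambda[\gamma_{\rm larc}^{\lambda,\ell,n}]<\mathcal{E}_\lambda[\gamma_{\rm larc}^{\lambda,\ell,m}]$ (whenever $n\ge n_{\lambda,\ell}$, so that these curves are defined), and $\mathcal{E}_\lambda[\gamma_{\rm loop}^{\lambda,\ell,n}]<\mathcal{E}_\lambda[\gamma_{\rm loop}^{\lambda,\ell,m}]$.
   Context: Elliptic functions: for $q\in[0,1)$, $x\in\mathbb{R}$, $\mathrm{F}(x,q)=\int_0^x(1-q^2\sin^2\theta)^{-1/2}\,d\theta$, $\mathrm{E}(x,q)=\int_0^x(1-q^2\sin^2\theta)^{1/2}\,d\theta$, $\mathrm{K}(q)=\mathrm{F}(\pi/2,q)$, $\mathrm{E}(q)=\mathrm{E}(\pi/2,q)$; $\mathrm{am}(\cdot,q)$ is the inverse of $x\mapsto\mathrm{F}(x,q)$, $\mathrm{cn}(x,q)=\cos\mathrm{am}(x,q)$. The function $q\mapsto2\mathrm{E}(q)-\mathrm{K}(q)$ is strictly decreasing on $[0,1)$ with unique zero $q_*\in(0,1)$. On $[1/\sqrt2,1)$ let $f(q)=(4q^4-5q^2+1)\mathrm{K}(q)+(-8q^4+8q^2-1)\mathrm{E}(q)$ and $g(q)=8(2\mathrm{E}(q)-\mathrm{K}(q))^2(2q^2-1)$.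 $f$ has a unique zero $\hat q\in[1/\sqrt2,1)$; $\hat\lambda:=g(\hat q)\approx0.70107$. $g(1/\sqrt2)=0$, $g$ strictly increasing on $[1/\sqrt2,\hat q]$, strictly decreasing on $[\hat q,q_*]$ with $g(q_* )=0$, strictly increasing on $[q_*,1)$ with $g\to\infty$ at $1$. For $c\in(0,\hat\lambda]$ let $q_1(c)\in(1/\sqrt2,\hat q]$, $q_2(c)\in[\hat q,q_* )$ solve $g(q)=c$; for $c>0$ let $q_3(c)\in(q_*,1)$ solve $g(q)=c$. $n_{\lambda,\ell}=\lceil\sqrt{\lambda\ell^2/\hat\lambda}\rceil$. $\mathcal{E}_\lambda[\gamma]=\int_\gamma k^2\,ds+\lambda L[\gamma]$ ($k$ signed curvature, $s$ arclength, $L$ length). Curves (arclength parametrized on $[0,2n\mathrm{K}(q)/\alpha]$): for $n\ge n_{\lambda,\ell}$, $\gamma_{\rm sarc}^{\lambda,\ell,n}(s)=\frac1\alpha\big(2\mathrm{E}(\mathrm{am}(\alpha s-\mathrm{K}(q),q),q)+2\mathrm{E}(q)-\alpha s,\ 2q\,\mathrm{cn}(\alpha s-\mathrm{K}(q),q)\big)$ with $q=q_1(\lambda\ell^2/n^2)$, $\alpha=\frac{2n}{\ell}(2\mathrm{E}(q)-\mathrm{K}(q))$; $\gamma_{\rm larc}^{\lambda,\ell,n}$ is the same formula with $q=q_2(\lambda\ell^2/n^2)$; for $n\ge1$, $\gamma_{\rm loop}^{\lambda,\ell,n}(s)=\frac1\alpha\big(-2\mathrm{E}(\mathrm{am}(\alpha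 s-\mathrm{K}(q),q),q)-2\mathrm{E}(q)+\alpha s,\ 2q\,\mathrm{cn}(\alpha s-\mathrm{K}(q),q)\big)$ with $q=q_3(\lambda\ell^2/n^2)$, $\alpha=\frac{2n}{\ell}(\mathrm{K}(q)-2\mathrm{E}(q))$. *)

theory Defs
  imports "HOL-Analysis.Analysis"
begin

definition oint :: "(real \<Rightarrow> real) \<Rightarrow> real \<Rightarrow> real" where
  "oint h x = (if 0 \<le> x then integral {0..x} h else - integral {x..0} h)"

definition ellF :: "real \<Rightarrow> real \<Rightarrow> real" where
  "ellF x q = oint (\<lambda>\<theta>. 1 / sqrt (1 - q\<^sup>2 * (sin \<theta>)\<^sup>2)) x"

definition ellE :: "real \<Rightarrow> real \<Rightarrow> real" where
  "ellE x q = oint (\<lambda>\<theta>. sqrt (1 - q\<^sup>2 * (sin \<theta>)\<^sup>2)) x"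

definition ellK :: "real \<Rightarrow> real" where
  "ellK q = ellF (pi / 2) q"

definition ellEc :: "real \<Rightarrow> real" where
  "ellEc q = ellE (pi / 2) q"

definition jac_am :: "real \<Rightarrow> real \<Rightarrow> real" where
  "jac_am x q = (THE y. ellF y q = x)"

definition jac_cn :: "real \<Rightarrow> real \<Rightarrow> real" where
  "jac_cn x q = cos (jac_am x q)"

definition q_star :: real where
  "q_star = (THE q. 0 < q \<and> q < 1 \<and> 2 * ellEc q - ellK q = 0)"

definition f_aux :: "real \<Rightarrow> real" where
  "f_aux q = (4*q^4 - 5*q\<^sup>2 + 1) * ellK q + (-8*q^4 + 8*q\<^sup>2 - 1) * ellEc q"

definition g_aux :: "real \<Rightarrow> real" where
  "g_aux q = 8 * (2 * ellEc q - ellK q)\<^sup>2 * (2*q\<^sup>2 - 1)"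

definition q_hat :: real where
  "q_hat = (THE q. 1 / sqrt 2 \<le> q \<and> q < 1 \<and> f_aux q = 0)"

definition lambda_hat :: real where
  "lambda_hat = g_aux q_hat"

definition q1 :: "real \<Rightarrow> real" where
  "q1 c = (THE q. 1 / sqrt 2 < q \<and> q \<le> q_hat \<and> g_aux q = c)"

definition q2 :: "real \<Rightarrow> real" where
  "q2 c = (THE q. q_hat \<le> q \<and> q < q_star \<and> g_aux q = c)"

definition q3 :: "real \<Rightarrow> real" where
  "q3 c = (THE q. q_star < q \<and> q < 1 \<and> g_aux q = c)"

definition n_min :: "real \<Rightarrow> real \<Rightarrow> int" where
  "n_min lam l = \<lceil>sqrt (lam * l\<^sup>2 / lambda_hat)\<rceil>"

definition speed :: "(real \<Rightarrow> real) \<Rightarrow> (real \<Rightarrow> real) \<Rightarrow> real \<Rightarrow> real" where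
  "speed x y t = sqrt ((deriv x t)\<^sup>2 + (deriv y t)\<^sup>2)"

definition curvature :: "(real \<Rightarrow> real) \<Rightarrow> (real \<Rightarrow> real) \<Rightarrow> real \<Rightarrow> real" where
  "curvature x y t =
     (deriv x t * deriv (deriv y) t - deriv y t * deriv (deriv x) t) / (speed x y t) ^ 3"

definition curve_length :: "(real \<Rightarrow> real) \<Rightarrow> (real \<Rightarrow> real) \<Rightarrow> real \<Rightarrow> real" where
  "curve_length x y T = integral {0..T} (speed x y)"

definition energy :: "real \<Rightarrow> (real \<Rightarrow> real) \<Rightarrow> (real \<Rightarrow> real) \<Rightarrow> real \<Rightarrow> real" where
  "energy lam x y T =
     integral {0..T} (\<lambda>t. (curvature x y t)\<^sup>2 * speed x y t) + lam * curve_length x y T"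

definition arc_x :: "real \<Rightarrow> real \<Rightarrow> real \<Rightarrow> real" where
  "arc_x q al s = (2 * ellE (jac_am (al * s - ellK q) q) q + 2 * ellEc q - al * s) / al"

definition arc_y :: "real \<Rightarrow> real \<Rightarrow> real \<Rightarrow> real" where
  "arc_y q al s = 2 * q * jac_cn (al * s - ellK q) q / al"

definition loop_x :: "real \<Rightarrow> real \<Rightarrow> real \<Rightarrow> real" where
  "loop_x q al s = (- 2 * ellE (jac_am (al * s - ellK q) q) q - 2 * ellEc q + al * s) / al"

definition arc_alpha :: "real \<Rightarrow> nat \<Rightarrow> real \<Rightarrow> real" where
  "arc_alpha l n q = 2 * real n / l * (2 * ellEc q - ellK q)"

definition loop_alpha :: "real \<Rightarrow> nat \<Rightarrow> real \<Rightarrow> real" where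
  "loop_alpha l n q = 2 * real n / l * (ellK q - 2 * ellEc q)"

definition sarc_q :: "real \<Rightarrow> real \<Rightarrow> nat \<Rightarrow> real" where
  "sarc_q lam l n = q1 (lam * l\<^sup>2 / (real n)\<^sup>2)"

definition larc_q :: "real \<Rightarrow> real \<Rightarrow> nat \<Rightarrow> real" where
  "larc_q lam l n = q2 (lam * l\<^sup>2 / (real n)\<^sup>2)"

definition loop_q :: "real \<Rightarrow> real \<Rightarrow> nat \<Rightarrow> real" where
  "loop_q lam l n = q3 (lam * l\<^sup>2 / (real n)\<^sup>2)"

definition energy_sarc :: "real \<Rightarrow> real \<Rightarrow> nat \<Rightarrow> real" where
  "energy_sarc lam l n =
    (let q = sarc_q lam l n; al = arc_alpha l n q
     in energy lam (arc_x q al) (arc_y q al) (2 * real n * ellK q / al))"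

definition energy_larc :: "real \<Rightarrow> real \<Rightarrow> nat \<Rightarrow> real" where
  "energy_larc lam l n =
    (let q = larc_q lam l n; al = arc_alpha l n q
     in energy lam (arc_x q al) (arc_y q al) (2 * real n * ellK q / al))"

definition energy_loop :: "real \<Rightarrow> real \<Rightarrow> nat \<Rightarrow> real" where
  "energy_loop lam l n =
    (let q = loop_q lam l n; al = loop_alpha l n q
     in energy lam (loop_x q al) (arc_y q al) (2 * real n * ellK q / al))"

end

theory Submission
  imports Defs
begin

lemma oint_diff:
  fixes h :: "real \<Rightarrow> real"
  assumes c: "continuous_on UNIV h" and ab: "a \<le> b"
  shows "oint h b - oint h a = integral {a..b} h"
proof -
  have int: "h integrable_on {u..v}" for u v
    by (rule integrable_continuous_real[OF continuous_on_subset[OF c subset_UNIV]])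
  consider "0 \<le> a" | "b \<le> 0" | "a < 0" "0 < b" using ab by linarith
  then show ?thesis
  proof cases
    case 1
    then show ?thesis using Henstock_Kurzweil_Integration.integral_combine[where a=0 and c=a and b=b and f=h] int ab
      unfolding oint_def by auto
  next
    case 2
    then show ?thesis using Henstock_Kurzweil_Integration.integral_combine[where a=a and c=b and b=0 and f=h] int ab
      unfolding oint_def by (cases "b = 0") auto
  next
    case 3
    then show ?thesis using Henstock_Kurzweil_Integration.integral_combine[where a=a and c=0 and b=b and f=h] int
      unfolding oint_def by auto
  qed
qed

lemma oint_has_real_derivative:
  fixes h :: "real \<Rightarrow> real"
  assumes c: "continuous_on UNIV h"
  shows "(oint h has_real_derivative h x) (at x)"
proof -
  define a where "a = x - 1"
  have "((\<lambda>y. integral {a..y} h) has_real_derivative h x) (at x within {a..x+1})"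
    by (rule integral_has_real_derivative) (auto simp: a_def intro: continuous_on_subset[OF c])
  moreover have "at x within {a..x+1} = at x"
    by (intro at_within_interior) (auto simp: a_def)
  ultimately have "((\<lambda>y. oint h a + integral {a..y} h) has_real_derivative h x) (at x)"
    by (auto intro!: derivative_eq_intros)
  then show ?thesis
  proof (rule has_field_derivative_transform_within_open[of _ _ _ "{a<..}"])
    fix y assume "y \<in> {a<..}"
    then show "oint h a + integral {a..y} h = oint h y"
      using oint_diff[OF c, of a y] by auto
  qed (auto simp: a_def)
qed

lemma oint_minus:
  fixes h :: "real \<Rightarrow> real"
  assumes c: "continuous_on UNIV h" and even: "\<And>t. h (- t) = h t"
  shows "oint h (- x) = - oint h x"
proof -
  have "((\<lambda>x. oint h x + oint h (- x)) has_real_derivative 0) (at x)" for x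
    using oint_has_real_derivative[OF c, of x]
      DERIV_chain2[OF oint_has_real_derivative[OF c, of "- x"] DERIV_minus[OF DERIV_ident]]
    by (auto intro!: derivative_eq_intros simp: even)
  from DERIV_isconst_all[of "\<lambda>x. oint h x + oint h (- x)", OF allI[OF this], of x 0]
  show ?thesis by (simp add: oint_def)
qed

lemma oint_add_period:
  fixes h :: "real \<Rightarrow> real"
  assumes c: "continuous_on UNIV h" and periodic: "\<And>t. h (t + p) = h t"
  shows "oint h (x + p) = oint h x + oint h p"
proof -
  have "((\<lambda>x. oint h (x + p) - oint h x) has_real_derivative 0) (at x)" for x
  proof -
    have shift: "((\<lambda>x. x + p) has_real_derivative 1) (at x)"
      by (auto intro!: derivative_eq_intros)
    show ?thesis
      using DERIV_diff[OF DERIV_chain2[OF oint_has_real_derivative[OF c] shift] oint_has_real_derivative[OF c, of x]]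
      by (simp add: periodic)
  qed
  from DERIV_isconst_all[of "\<lambda>x. oint h (x + p) - oint h x", OF allI[OF this], of x 0]
  show ?thesis by (simp add: oint_def)
qed

lemma oint_odd_multiple_half_pi:
  fixes h :: "real \<Rightarrow> real"
  assumes c: "continuous_on UNIV h" and even: "\<And>t. h (- t) = h t"
    and periodic: "\<And>t. h (t + pi) = h t" and "odd k"
  shows "oint h (real k * pi / 2) = real k * oint h (pi / 2)"
proof -
  have pi: "oint h pi = 2 * oint h (pi / 2)"
    using oint_add_period[OF c periodic, of "- (pi / 2)"] oint_minus[OF c even, of "pi / 2"] by simp
  obtain j where k: "k = 2 * j + 1" using \<open>odd k\<close> oddE by blast
  have "oint h (real (2 * j + 1) * pi / 2) = real (2 * j + 1) * oint h (pi / 2)"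
  proof (induction j)
    case (Suc j)
    have "real (2 * Suc j + 1) * pi / 2 = real (2 * j + 1) * pi / 2 + pi" by (simp add: field_simps)
    then show ?case using oint_add_period[OF c periodic, of "real (2 * j + 1) * pi / 2"] Suc pi
      by (simp add: field_simps)
  qed simp
  then show ?thesis unfolding k .
qed

definition ell_delta :: "real \<Rightarrow> real \<Rightarrow> real" where
  "ell_delta q t = sqrt (1 - q\<^sup>2 * (sin t)\<^sup>2)"

lemma ell_radicand_pos:
  fixes q t :: real
  assumes "\<bar>q\<bar> < 1"
  shows "0 < 1 - q\<^sup>2 * (sin t)\<^sup>2"
proof -
  have "q\<^sup>2 < 1" using assms by (simp add: abs_square_less_1)
  moreover have "(sin t)\<^sup>2 \<le> 1" by (simp add: abs_square_le_1)
  ultimately have "q\<^sup>2 * (sin t)\<^sup>2 < 1" using mult_left_le[of "(sin t)\<^sup>2" "q\<^sup>2"] by simp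
  then show ?thesis by simp
qed

lemma ell_delta_pos: "\<bar>q\<bar> < 1 \<Longrightarrow> 0 < ell_delta q t"
  using ell_radicand_pos[of q t] by (simp add: ell_delta_def)

lemma ell_delta_squared: "\<bar>q\<bar> < 1 \<Longrightarrow> (ell_delta q t)\<^sup>2 = 1 - q\<^sup>2 * (sin t)\<^sup>2"
  using ell_radicand_pos[of q t] by (simp add: ell_delta_def)

lemma ell_delta_le_1: "ell_delta q t \<le> 1"
  by (simp add: ell_delta_def)

lemma ell_delta_minus: "ell_delta q (- t) = ell_delta q t"
  and ell_delta_add_pi: "ell_delta q (t + pi) = ell_delta q t"
  by (simp_all add: ell_delta_def)

lemma continuous_on_ell_delta: "continuous_on UNIV (ell_delta q)"
  unfolding ell_delta_def by (intro continuous_intros)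

lemma continuous_on_inverse_ell_delta: "\<bar>q\<bar> < 1 \<Longrightarrow> continuous_on UNIV (\<lambda>t. 1 / ell_delta q t)"
  using ell_delta_pos by (intro continuous_intros continuous_on_ell_delta) (auto simp: less_imp_neq[symmetric])

lemma ell_delta_has_real_derivative:
  assumes "\<bar>q\<bar> < 1"
  shows "(ell_delta q has_real_derivative - q\<^sup>2 * sin t * cos t / ell_delta q t) (at t)"
proof -
  have "((\<lambda>t. sqrt (1 - q\<^sup>2 * (sin t)\<^sup>2)) has_real_derivative
      inverse (sqrt (1 - q\<^sup>2 * (sin t)\<^sup>2)) / 2 * - (q\<^sup>2 * (2 * sin t * cos t))) (at t)"
    by (intro DERIV_chain2[OF DERIV_real_sqrt] ell_radicand_pos[OF assms] derivative_eq_intros) auto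
  then show ?thesis unfolding ell_delta_def by (simp add: field_simps)
qed

lemma ellF_eq_oint: "ellF x q = oint (\<lambda>t. 1 / ell_delta q t) x"
  by (simp add: ellF_def ell_delta_def)

lemma ellE_eq_oint: "ellE x q = oint (ell_delta q) x"
  by (simp add: ellE_def ell_delta_def[abs_def])

lemma ellF_has_real_derivative:
  "\<bar>q\<bar> < 1 \<Longrightarrow> ((\<lambda>x. ellF x q) has_real_derivative 1 / ell_delta q x) (at x)"
  unfolding ellF_eq_oint by (rule oint_has_real_derivative[OF continuous_on_inverse_ell_delta])

lemma ellE_has_real_derivative:
  "\<bar>q\<bar> < 1 \<Longrightarrow> ((\<lambda>x. ellE x q) has_real_derivative ell_delta q x) (at x)"
  unfolding ellE_eq_oint by (rule oint_has_real_derivative[OF continuous_on_ell_delta])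

lemma ellF_minus: "\<bar>q\<bar> < 1 \<Longrightarrow> ellF (- x) q = - ellF x q"
  unfolding ellF_eq_oint by (rule oint_minus[OF continuous_on_inverse_ell_delta]) (simp_all add: ell_delta_minus)

lemma ellE_minus: "ellE (- x) q = - ellE x q"
  unfolding ellE_eq_oint by (rule oint_minus[OF continuous_on_ell_delta]) (simp add: ell_delta_minus)

lemma ellF_odd_multiple_half_pi: "\<bar>q\<bar> < 1 \<Longrightarrow> odd k \<Longrightarrow> ellF (real k * pi / 2) q = real k * ellK q"
  unfolding ellF_eq_oint ellK_def
  by (rule oint_odd_multiple_half_pi[OF continuous_on_inverse_ell_delta])
    (simp_all add: ell_delta_minus ell_delta_add_pi)

lemma ellE_odd_multiple_half_pi: "odd k \<Longrightarrow> ellE (real k * pi / 2) q = real k * ellEc q"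
  unfolding ellE_eq_oint ellEc_def
  by (rule oint_odd_multiple_half_pi[OF continuous_on_ell_delta]) (simp_all add: ell_delta_minus ell_delta_add_pi)

lemma ellF_strict_mono:
  assumes q: "\<bar>q\<bar> < 1"
  shows "strict_mono (\<lambda>x. ellF x q)"
proof (rule strict_monoI)
  fix x y :: real
  assume "x < y"
  then show "ellF x q < ellF y q"
  proof (rule DERIV_pos_imp_increasing)
    fix z
    show "\<exists>y. ((\<lambda>x. ellF x q) has_real_derivative y) (at z) \<and> 0 < y"
      using ellF_has_real_derivative[OF q, of z] ell_delta_pos[OF q, of z] by auto
  qed
qed

lemma ellF_ge_self:
  assumes q: "\<bar>q\<bar> < 1" and "0 \<le> x"
  shows "x \<le> ellF x q"
proof -
  have "ellF 0 q - 0 \<le> ellF x q - x"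
  proof (rule DERIV_nonneg_imp_nondecreasing[OF \<open>0 \<le> x\<close>])
    fix z
    have "1 \<le> 1 / ell_delta q z" using ell_delta_pos[OF q, of z] ell_delta_le_1[of q z] by simp
    then show "\<exists>y. ((\<lambda>x. ellF x q - x) has_real_derivative y) (at z) \<and> 0 \<le> y"
      by (intro exI[of _ "1 / ell_delta q z - 1"] conjI DERIV_diff ellF_has_real_derivative[OF q] DERIV_ident) auto
  qed
  then show ?thesis by (simp add: ellF_def oint_def)
qed

lemma ellK_ge_half_pi: "\<bar>q\<bar> < 1 \<Longrightarrow> pi / 2 \<le> ellK q"
  unfolding ellK_def by (rule ellF_ge_self) auto

lemma ellK_pos: "\<bar>q\<bar> < 1 \<Longrightarrow> 0 < ellK q"
  using ellK_ge_half_pi[of q] pi_gt_zero by linarith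

lemma ex1_ellF_eq:
  assumes q: "\<bar>q\<bar> < 1"
  shows "\<exists>!y. ellF y q = x"
proof (rule ex_ex1I)
  have "continuous_on UNIV (\<lambda>y. ellF y q)"
    using ellF_has_real_derivative[OF q] by (meson DERIV_isCont continuous_at_imp_continuous_on)
  then have "continuous_on {- \<bar>x\<bar>..\<bar>x\<bar>} (\<lambda>y. ellF y q)"
    by (rule continuous_on_subset) simp
  then have "\<exists>y. - \<bar>x\<bar> \<le> y \<and> y \<le> \<bar>x\<bar> \<and> ellF y q = x"
    by (rule IVT'[rotated 3]) (use ellF_ge_self[OF q, of "\<bar>x\<bar>"] ellF_minus[OF q, of "\<bar>x\<bar>"] in auto)
  then show "\<exists>y. ellF y q = x" by blast
qed (metis strict_mono_eq[OF ellF_strict_mono[OF q]])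

lemma ellF_jac_am: "\<bar>q\<bar> < 1 \<Longrightarrow> ellF (jac_am x q) q = x"
  unfolding jac_am_def by (rule theI'[OF ex1_ellF_eq])

lemma jac_am_ellF: "\<bar>q\<bar> < 1 \<Longrightarrow> jac_am (ellF y q) q = y"
  unfolding jac_am_def by (rule the1_equality[OF ex1_ellF_eq]) auto

lemma jac_am_has_real_derivative:
  assumes q: "\<bar>q\<bar> < 1"
  shows "((\<lambda>x. jac_am x q) has_real_derivative ell_delta q (jac_am x q)) (at x)"
proof -
  have "isCont (\<lambda>x. jac_am x q) (ellF (jac_am x q) q)"
    by (rule isCont_inverse_function[where d=1])
      (auto simp: jac_am_ellF[OF q] intro: DERIV_isCont ellF_has_real_derivative[OF q])
  then have cont: "isCont (\<lambda>x. jac_am x q) x" by (simp add: ellF_jac_am[OF q])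
  have "((\<lambda>x. jac_am x q) has_real_derivative inverse (1 / ell_delta q (jac_am x q))) (at x)"
    by (rule DERIV_inverse_function[where f="\<lambda>x. ellF x q" and a="x - 1" and b="x + 1"])
      (simp_all add: cont ellF_has_real_derivative[OF q] ellF_jac_am[OF q]
        less_imp_neq[OF ell_delta_pos[OF q], symmetric])
  then show ?thesis by simp
qed

definition arc_am :: "real \<Rightarrow> real \<Rightarrow> real \<Rightarrow> real" where
  "arc_am q \<alpha> s = jac_am (\<alpha> * s - ellK q) q"

lemma loop_x_eq_minus_arc_x: "loop_x q \<alpha> = (\<lambda>s. - 1 * arc_x q \<alpha> s)"
  by (simp add: fun_eq_iff loop_x_def arc_x_def field_simps)

lemma arc_am_has_real_derivative:
  assumes q: "\<bar>q\<bar> < 1"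
  shows "(arc_am q \<alpha> has_real_derivative \<alpha> * ell_delta q (arc_am q \<alpha> s)) (at s)"
  unfolding arc_am_def[abs_def]
  using DERIV_chain2[OF jac_am_has_real_derivative[OF q]
      DERIV_diff[OF DERIV_cmult[OF DERIV_ident, of \<alpha>] DERIV_const[of "ellK q"]]]
  by (simp add: mult.commute[of "ell_delta q _" \<alpha>])

lemma arc_x_has_real_derivative:
  assumes q: "\<bar>q\<bar> < 1" and \<alpha>: "\<alpha> \<noteq> 0"
  shows "(arc_x q \<alpha> has_real_derivative 1 - 2 * q\<^sup>2 * (sin (arc_am q \<alpha> s))\<^sup>2) (at s)"
proof -
  have eq: "arc_x q \<alpha> = (\<lambda>s. (2 * ellE (arc_am q \<alpha> s) q + 2 * ellEc q - \<alpha> * s) / \<alpha>)"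
    by (simp add: fun_eq_iff arc_am_def arc_x_def)
  have d: "((\<lambda>s. (2 * ellE (arc_am q \<alpha> s) q + 2 * ellEc q - \<alpha> * s) / \<alpha>) has_real_derivative
      (2 * (ell_delta q (arc_am q \<alpha> s) * (\<alpha> * ell_delta q (arc_am q \<alpha> s))) + 0 - \<alpha> * 1) / \<alpha>) (at s)"
    by (intro DERIV_cdivide DERIV_diff DERIV_add DERIV_const DERIV_cmult DERIV_ident
        DERIV_chain2[OF ellE_has_real_derivative[OF q] arc_am_has_real_derivative[OF q]])
  have e: "(2 * (ell_delta q (arc_am q \<alpha> s) * (\<alpha> * ell_delta q (arc_am q \<alpha> s))) + 0 - \<alpha> * 1) / \<alpha>
      = 1 - 2 * q\<^sup>2 * (sin (arc_am q \<alpha> s))\<^sup>2"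
    using \<alpha> ell_delta_squared[OF q, of "arc_am q \<alpha> s"] by (simp add: power2_eq_square field_simps) algebra
  show ?thesis unfolding eq using d unfolding e .
qed

lemma arc_y_has_real_derivative:
  assumes q: "\<bar>q\<bar> < 1" and \<alpha>: "\<alpha> \<noteq> 0"
  shows "(arc_y q \<alpha> has_real_derivative - 2 * q * sin (arc_am q \<alpha> s) * ell_delta q (arc_am q \<alpha> s)) (at s)"
proof -
  have eq: "arc_y q \<alpha> = (\<lambda>s. 2 * q * cos (arc_am q \<alpha> s) / \<alpha>)"
    by (simp add: fun_eq_iff arc_am_def arc_y_def jac_cn_def)
  have d: "((\<lambda>s. 2 * q * cos (arc_am q \<alpha> s) / \<alpha>) has_real_derivative
      2 * q * (- sin (arc_am q \<alpha> s) * (\<alpha> * ell_delta q (arc_am q \<alpha> s))) / \<alpha>) (at s)"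
    by (intro DERIV_cdivide DERIV_cmult DERIV_chain2[OF DERIV_cos arc_am_has_real_derivative[OF q]])
  have e: "2 * q * (- sin (arc_am q \<alpha> s) * (\<alpha> * ell_delta q (arc_am q \<alpha> s))) / \<alpha>
      = - 2 * q * sin (arc_am q \<alpha> s) * ell_delta q (arc_am q \<alpha> s)"
    using \<alpha> by (simp add: field_simps)
  show ?thesis unfolding eq using d unfolding e .
qed

lemma arc_x_second_derivative:
  assumes q: "\<bar>q\<bar> < 1"
  shows "((\<lambda>s. 1 - 2 * q\<^sup>2 * (sin (arc_am q \<alpha> s))\<^sup>2) has_real_derivative
      - 4 * q\<^sup>2 * \<alpha> * sin (arc_am q \<alpha> s) * cos (arc_am q \<alpha> s) * ell_delta q (arc_am q \<alpha> s)) (at s)"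
  using DERIV_chain2[OF DERIV_sin arc_am_has_real_derivative[OF q], of s] arc_am_has_real_derivative[OF q, of \<alpha> s]
  by (auto intro!: derivative_eq_intros simp: algebra_simps)

lemma arc_y_second_derivative:
  assumes q: "\<bar>q\<bar> < 1"
  shows "((\<lambda>s. - 2 * q * sin (arc_am q \<alpha> s) * ell_delta q (arc_am q \<alpha> s)) has_real_derivative
      - 2 * q * \<alpha> * cos (arc_am q \<alpha> s) * (1 - 2 * q\<^sup>2 * (sin (arc_am q \<alpha> s))\<^sup>2)) (at s)"
proof -
  note dA = arc_am_has_real_derivative[OF q]
  have d: "((\<lambda>s. - 2 * q * sin (arc_am q \<alpha> s) * ell_delta q (arc_am q \<alpha> s)) has_real_derivative
      - 2 * q * (cos (arc_am q \<alpha> s) * (\<alpha> * ell_delta q (arc_am q \<alpha> s))) * ell_delta q (arc_am q \<alpha> s)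
      + - q\<^sup>2 * sin (arc_am q \<alpha> s) * cos (arc_am q \<alpha> s) / ell_delta q (arc_am q \<alpha> s)
        * (\<alpha> * ell_delta q (arc_am q \<alpha> s)) * (- 2 * q * sin (arc_am q \<alpha> s))) (at s)"
    by (rule DERIV_mult[OF DERIV_cmult[OF DERIV_chain2[OF DERIV_sin dA]]
          DERIV_chain2[OF ell_delta_has_real_derivative[OF q] dA]])
  have e: "- 2 * q * (cos (arc_am q \<alpha> s) * (\<alpha> * ell_delta q (arc_am q \<alpha> s))) * ell_delta q (arc_am q \<alpha> s)
      + - q\<^sup>2 * sin (arc_am q \<alpha> s) * cos (arc_am q \<alpha> s) / ell_delta q (arc_am q \<alpha> s)
        * (\<alpha> * ell_delta q (arc_am q \<alpha> s)) * (- 2 * q * sin (arc_am q \<alpha> s))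
      = - 2 * q * \<alpha> * cos (arc_am q \<alpha> s) * (1 - 2 * q\<^sup>2 * (sin (arc_am q \<alpha> s))\<^sup>2)"
    using ell_delta_pos[OF q, of "arc_am q \<alpha> s"] ell_delta_squared[OF q, of "arc_am q \<alpha> s"]
    by (simp add: power2_eq_square field_simps) algebra
  show ?thesis using d unfolding e .
qed

lemma signed_arc_speed_curvature:
  fixes q \<alpha> \<sigma> :: real
  assumes q: "\<bar>q\<bar> < 1" and \<alpha>: "\<alpha> \<noteq> 0" and \<sigma>: "\<sigma>\<^sup>2 = 1"
  shows "speed (\<lambda>s. \<sigma> * arc_x q \<alpha> s) (arc_y q \<alpha>) s = 1"
    and "curvature (\<lambda>s. \<sigma> * arc_x q \<alpha> s) (arc_y q \<alpha>) s = - 2 * \<sigma> * q * \<alpha> * cos (arc_am q \<alpha> s)"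
proof -
  have dx: "deriv (\<lambda>s. \<sigma> * arc_x q \<alpha> s) = (\<lambda>s. \<sigma> * (1 - 2 * q\<^sup>2 * (sin (arc_am q \<alpha> s))\<^sup>2))"
    by (intro ext DERIV_imp_deriv DERIV_cmult arc_x_has_real_derivative q \<alpha>)
  have dxx: "deriv (\<lambda>s. \<sigma> * (1 - 2 * q\<^sup>2 * (sin (arc_am q \<alpha> s))\<^sup>2))
      = (\<lambda>s. \<sigma> * (- 4 * q\<^sup>2 * \<alpha> * sin (arc_am q \<alpha> s) * cos (arc_am q \<alpha> s) * ell_delta q (arc_am q \<alpha> s)))"
    by (intro ext DERIV_imp_deriv DERIV_cmult arc_x_second_derivative q)
  have dy: "deriv (arc_y q \<alpha>) = (\<lambda>s. - 2 * q * sin (arc_am q \<alpha> s) * ell_delta q (arc_am q \<alpha> s))"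
    by (intro ext DERIV_imp_deriv arc_y_has_real_derivative q \<alpha>)
  have dyy: "deriv (\<lambda>s. - 2 * q * sin (arc_am q \<alpha> s) * ell_delta q (arc_am q \<alpha> s))
      = (\<lambda>s. - 2 * q * \<alpha> * cos (arc_am q \<alpha> s) * (1 - 2 * q\<^sup>2 * (sin (arc_am q \<alpha> s))\<^sup>2))"
    by (intro ext DERIV_imp_deriv arc_y_second_derivative q)
  have delta_sq: "(ell_delta q (arc_am q \<alpha> s))\<^sup>2 = 1 - q\<^sup>2 * (sin (arc_am q \<alpha> s))\<^sup>2"
    by (rule ell_delta_squared[OF q])
  have "(\<sigma> * (1 - 2 * q\<^sup>2 * (sin (arc_am q \<alpha> s))\<^sup>2))\<^sup>2
      + (- 2 * q * sin (arc_am q \<alpha> s) * ell_delta q (arc_am q \<alpha> s))\<^sup>2 = 1"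
    by (simp add: power_mult_distrib delta_sq \<sigma>) (simp add: algebra_simps power2_eq_square)
  then show speed: "speed (\<lambda>s. \<sigma> * arc_x q \<alpha> s) (arc_y q \<alpha>) s = 1"
    unfolding speed_def dx dy by simp
  have "\<sigma> * (1 - 2 * q\<^sup>2 * (sin (arc_am q \<alpha> s))\<^sup>2)
        * (- 2 * q * \<alpha> * cos (arc_am q \<alpha> s) * (1 - 2 * q\<^sup>2 * (sin (arc_am q \<alpha> s))\<^sup>2))
      - (- 2 * q * sin (arc_am q \<alpha> s) * ell_delta q (arc_am q \<alpha> s))
        * (\<sigma> * (- 4 * q\<^sup>2 * \<alpha> * sin (arc_am q \<alpha> s) * cos (arc_am q \<alpha> s) * ell_delta q (arc_am q \<alpha> s)))
      = - 2 * \<sigma> * q * \<alpha> * cos (arc_am q \<alpha> s)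
        * ((1 - 2 * q\<^sup>2 * (sin (arc_am q \<alpha> s))\<^sup>2)\<^sup>2
          + 4 * q\<^sup>2 * (sin (arc_am q \<alpha> s))\<^sup>2 * (ell_delta q (arc_am q \<alpha> s))\<^sup>2)"
    by (simp add: algebra_simps power2_eq_square)
  also have "\<dots> = - 2 * \<sigma> * q * \<alpha> * cos (arc_am q \<alpha> s)"
    by (simp add: delta_sq) (simp add: algebra_simps power2_eq_square)
  finally show "curvature (\<lambda>s. \<sigma> * arc_x q \<alpha> s) (arc_y q \<alpha>) s = - 2 * \<sigma> * q * \<alpha> * cos (arc_am q \<alpha> s)"
    unfolding curvature_def speed dx dxx dy dyy by simp
qed

lemma arc_bending_integral:
  fixes q \<alpha> :: real and n :: nat
  assumes q: "\<bar>q\<bar> < 1" and \<alpha>: "0 < \<alpha>" and n: "0 < n"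
  shows "integral {0..2 * real n * ellK q / \<alpha>} (\<lambda>s. 4 * q\<^sup>2 * \<alpha>\<^sup>2 * (cos (arc_am q \<alpha> s))\<^sup>2)
    = 8 * real n * \<alpha> * (ellEc q - (1 - q\<^sup>2) * ellK q)"
proof -
  define T where "T = 2 * real n * ellK q / \<alpha>"
  (* G is an antiderivative of the integrand; on [0, T] the amplitude runs from -pi/2 to (2n - 1) pi/2. *)
  define G where "G = (\<lambda>s. 4 * \<alpha> * (ellE (arc_am q \<alpha> s) q - (1 - q\<^sup>2) * (\<alpha> * s - ellK q)))"
  have T: "0 \<le> T" unfolding T_def using ellK_pos[OF q] \<alpha> by simp
  have dG: "(G has_real_derivative 4 * q\<^sup>2 * \<alpha>\<^sup>2 * (cos (arc_am q \<alpha> s))\<^sup>2) (at s)" for s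
  proof -
    have d: "(G has_real_derivative 4 * \<alpha> * (ell_delta q (arc_am q \<alpha> s) * (\<alpha> * ell_delta q (arc_am q \<alpha> s))
        - (1 - q\<^sup>2) * (\<alpha> * 1 - 0))) (at s)"
      unfolding G_def
      by (intro DERIV_cmult DERIV_diff DERIV_ident DERIV_const
          DERIV_chain2[OF ellE_has_real_derivative[OF q] arc_am_has_real_derivative[OF q]])
    have e: "4 * \<alpha> * (ell_delta q (arc_am q \<alpha> s) * (\<alpha> * ell_delta q (arc_am q \<alpha> s))
        - (1 - q\<^sup>2) * (\<alpha> * 1 - 0)) = 4 * q\<^sup>2 * \<alpha>\<^sup>2 * (cos (arc_am q \<alpha> s))\<^sup>2"
      using ell_delta_squared[OF q, of "arc_am q \<alpha> s"] sin_cos_squared_add[of "arc_am q \<alpha> s"] by algebra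
    show ?thesis using d unfolding e .
  qed
  define k where "k = 2 * n - 1"
  have odd: "odd k" unfolding k_def using n by simp
  have k: "real k = 2 * real n - 1" unfolding k_def using n by (simp add: of_nat_diff)
  have "\<alpha> * T - ellK q = real k * ellK q" unfolding T_def k using \<alpha> by (simp add: algebra_simps)
  also have "\<dots> = ellF (real k * pi / 2) q" by (rule ellF_odd_multiple_half_pi[OF q odd, symmetric])
  finally have E_T: "ellE (arc_am q \<alpha> T) q = real k * ellEc q"
    by (simp add: arc_am_def jac_am_ellF[OF q] ellE_odd_multiple_half_pi[OF odd])
  have E_0: "ellE (arc_am q \<alpha> 0) q = - ellEc q"
    using ellF_minus[OF q, of "pi / 2"] jac_am_ellF[OF q, of "- (pi / 2)"] ellE_minus[of "pi / 2" q]
    by (simp add: arc_am_def ellK_def ellEc_def)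
  have "integral {0..T} (\<lambda>s. 4 * q\<^sup>2 * \<alpha>\<^sup>2 * (cos (arc_am q \<alpha> s))\<^sup>2) = G T - G 0"
    by (rule integral_unique, rule fundamental_theorem_of_calculus[OF T])
      (use dG in \<open>auto simp: has_real_derivative_iff_has_vector_derivative[symmetric]
        intro: has_field_derivative_at_within\<close>)
  also have "\<alpha> * T = 2 * real n * ellK q" unfolding T_def using \<alpha> by simp
  then have "G T - G 0 = 8 * real n * \<alpha> * (ellEc q - (1 - q\<^sup>2) * ellK q)"
    unfolding G_def E_T E_0 k by (simp add: algebra_simps)
  finally show ?thesis unfolding T_def .
qed

lemma signed_arc_energy:
  fixes q \<alpha> \<sigma> lam :: real and n :: nat
  assumes q: "\<bar>q\<bar> < 1" and \<alpha>: "0 < \<alpha>" and \<sigma>: "\<sigma>\<^sup>2 = 1" and n: "0 < n"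
  shows "energy lam (\<lambda>s. \<sigma> * arc_x q \<alpha> s) (arc_y q \<alpha>) (2 * real n * ellK q / \<alpha>)
     = 8 * real n * \<alpha> * (ellEc q - (1 - q\<^sup>2) * ellK q) + lam * (2 * real n * ellK q / \<alpha>)"
proof -
  note sc = signed_arc_speed_curvature[OF q less_imp_neq[OF \<alpha>, symmetric] \<sigma>]
  have bending: "(curvature (\<lambda>s. \<sigma> * arc_x q \<alpha> s) (arc_y q \<alpha>) s)\<^sup>2
      * speed (\<lambda>s. \<sigma> * arc_x q \<alpha> s) (arc_y q \<alpha>) s = 4 * q\<^sup>2 * \<alpha>\<^sup>2 * (cos (arc_am q \<alpha> s))\<^sup>2" for s
    unfolding sc using \<sigma> by (simp add: power_mult_distrib)
  have "0 \<le> 2 * real n * ellK q / \<alpha>" using ellK_pos[OF q] \<alpha> by simp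
  then have "curve_length (\<lambda>s. \<sigma> * arc_x q \<alpha> s) (arc_y q \<alpha>) (2 * real n * ellK q / \<alpha>) = 2 * real n * ellK q / \<alpha>"
    unfolding curve_length_def sc by simp
  then show ?thesis unfolding energy_def bending arc_bending_integral[OF q \<alpha> n] by simp
qed

lemma has_real_derivative_parametric_integral:
  fixes f f' :: "real \<Rightarrow> real \<Rightarrow> real"
  assumes U: "open U" "convex U" "x0 \<in> U"
    and f': "\<And>x t. x \<in> U \<Longrightarrow> t \<in> {a..b} \<Longrightarrow> ((\<lambda>x. f x t) has_real_derivative f' x t) (at x)"
    and f: "\<And>x. x \<in> U \<Longrightarrow> f x integrable_on {a..b}"
    and cont: "continuous_on (U \<times> {a..b}) (\<lambda>(x, t). f' x t)"
  shows "((\<lambda>x. integral {a..b} (f x)) has_real_derivative integral {a..b} (f' x0)) (at x0)"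
proof -
  have "((\<lambda>x. integral (cbox a b) (f x)) has_real_derivative integral (cbox a b) (f' x0)) (at x0 within U)"
    by (rule leibniz_rule_field_derivative) (use U f' f cont in \<open>auto intro: has_field_derivative_at_within\<close>)
  moreover have "at x0 within U = at x0" using U by (intro at_within_open) auto
  ultimately show ?thesis by simp
qed

lemma ellK_has_integral: "\<bar>q\<bar> < 1 \<Longrightarrow> ((\<lambda>t. 1 / ell_delta q t) has_integral ellK q) {0..pi / 2}"
  unfolding ellK_def ellF_eq_oint oint_def
  by (simp add: integrable_integral integrable_continuous_real continuous_on_subset[OF continuous_on_inverse_ell_delta])

lemma ellEc_has_integral: "(ell_delta q has_integral ellEc q) {0..pi / 2}"
  unfolding ellEc_def ellE_eq_oint oint_def
  by (simp add: integrable_integral integrable_continuous_real continuous_on_subset[OF continuous_on_ell_delta])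

lemma ell_delta_has_real_derivative_modulus:
  assumes "\<bar>q\<bar> < 1"
  shows "((\<lambda>q. ell_delta q t) has_real_derivative - q * (sin t)\<^sup>2 / ell_delta q t) (at q)"
proof -
  have "((\<lambda>q. sqrt (1 - q\<^sup>2 * (sin t)\<^sup>2)) has_real_derivative
      inverse (sqrt (1 - q\<^sup>2 * (sin t)\<^sup>2)) / 2 * - (2 * q * (sin t)\<^sup>2)) (at q)"
    by (intro DERIV_chain2[OF DERIV_real_sqrt] ell_radicand_pos[OF assms] derivative_eq_intros) auto
  then show ?thesis unfolding ell_delta_def by (simp add: field_simps)
qed

lemma continuous_on_ell_delta_modulus_pos:
  assumes "continuous_on (S \<times> T) (\<lambda>(q, t). g q t)"
    and "\<And>q t. q \<in> S \<Longrightarrow> t \<in> T \<Longrightarrow> ell_delta q t \<noteq> 0"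
  shows "continuous_on (S \<times> T) (\<lambda>(q, t). g q t / (ell_delta q t) ^ k)"
proof -
  have "continuous_on (S \<times> T) (\<lambda>z. g (fst z) (snd z) / (ell_delta (fst z) (snd z)) ^ k)"
    using assms unfolding ell_delta_def split_beta by (intro continuous_intros) auto
  then show ?thesis by (simp add: split_beta)
qed

lemma ellK_has_real_derivative_integral:
  assumes q: "\<bar>q\<bar> < 1"
  shows "(ellK has_real_derivative integral {0..pi / 2} (\<lambda>t. q * (sin t)\<^sup>2 / (ell_delta q t) ^ 3)) (at q)"
proof -
  have "((\<lambda>x. integral {0..pi / 2} (\<lambda>t. 1 / ell_delta x t)) has_real_derivative
      integral {0..pi / 2} (\<lambda>t. q * (sin t)\<^sup>2 / (ell_delta q t) ^ 3)) (at q)"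
  proof (rule has_real_derivative_parametric_integral[where U="{-1<..<1}"])
    fix x t :: real assume "x \<in> {-1<..<1}"
    then have x: "\<bar>x\<bar> < 1" by auto
    have d: "((\<lambda>x. 1 / ell_delta x t) has_real_derivative
        (0 * ell_delta x t - 1 * (- x * (sin t)\<^sup>2 / ell_delta x t)) / (ell_delta x t * ell_delta x t)) (at x)"
      by (rule DERIV_divide[OF DERIV_const ell_delta_has_real_derivative_modulus[OF x]])
        (use ell_delta_pos[OF x, of t] in simp)
    have e: "(0 * ell_delta x t - 1 * (- x * (sin t)\<^sup>2 / ell_delta x t)) / (ell_delta x t * ell_delta x t)
        = x * (sin t)\<^sup>2 / (ell_delta x t) ^ 3"
      using ell_delta_pos[OF x, of t] by (simp add: field_simps power3_eq_cube)
    show "((\<lambda>x. 1 / ell_delta x t) has_real_derivative x * (sin t)\<^sup>2 / (ell_delta x t) ^ 3) (at x)"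
      using d unfolding e .
  next
    show "continuous_on ({-1<..<1} \<times> {0..pi / 2}) (\<lambda>(x, t). x * (sin t)\<^sup>2 / (ell_delta x t) ^ 3)"
      by (rule continuous_on_ell_delta_modulus_pos)
        (auto intro!: continuous_intros simp: split_beta less_imp_neq[OF ell_delta_pos, symmetric])
  qed (use q in \<open>auto intro!: integrable_continuous_real continuous_on_subset[OF continuous_on_inverse_ell_delta]\<close>)
  then show ?thesis unfolding ellK_def ellF_eq_oint oint_def[abs_def] by simp
qed

lemma ellEc_has_real_derivative_integral:
  assumes q: "\<bar>q\<bar> < 1"
  shows "(ellEc has_real_derivative integral {0..pi / 2} (\<lambda>t. - q * (sin t)\<^sup>2 / ell_delta q t)) (at q)"
proof -
  have "((\<lambda>x. integral {0..pi / 2} (ell_delta x)) has_real_derivative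
      integral {0..pi / 2} (\<lambda>t. - q * (sin t)\<^sup>2 / ell_delta q t)) (at q)"
  proof (rule has_real_derivative_parametric_integral[where U="{-1<..<1}"])
    fix x t :: real assume "x \<in> {-1<..<1}"
    then show "((\<lambda>x. ell_delta x t) has_real_derivative - x * (sin t)\<^sup>2 / ell_delta x t) (at x)"
      by (intro ell_delta_has_real_derivative_modulus) auto
  next
    have "continuous_on ({-1<..<1} \<times> {0..pi / 2}) (\<lambda>(x, t). - x * (sin t)\<^sup>2 / (ell_delta x t) ^ 1)"
      by (rule continuous_on_ell_delta_modulus_pos)
        (auto intro!: continuous_intros simp: split_beta less_imp_neq[OF ell_delta_pos, symmetric])
    then show "continuous_on ({-1<..<1} \<times> {0..pi / 2}) (\<lambda>(x, t). - x * (sin t)\<^sup>2 / ell_delta x t)"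
      by simp
  qed (use q in \<open>auto intro!: integrable_continuous_real continuous_on_subset[OF continuous_on_ell_delta]\<close>)
  then show ?thesis unfolding ellEc_def ellE_eq_oint oint_def[abs_def] by simp
qed

lemma ellEc_has_real_derivative:
  assumes q0: "0 < q" and q1: "q < 1"
  shows "(ellEc has_real_derivative (ellEc q - ellK q) / q) (at q)"
proof -
  have q: "\<bar>q\<bar> < 1" using q0 q1 by auto
  have "((\<lambda>t. (ell_delta q t - 1 / ell_delta q t) / q) has_integral (ellEc q - ellK q) / q) {0..pi / 2}"
    by (intro has_integral_divide has_integral_diff ellEc_has_integral ellK_has_integral q)
  then have "((\<lambda>t. - q * (sin t)\<^sup>2 / ell_delta q t) has_integral (ellEc q - ellK q) / q) {0..pi / 2}"
  proof (rule has_integral_eq[rotated])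
    fix t
    show "(ell_delta q t - 1 / ell_delta q t) / q = - q * (sin t)\<^sup>2 / ell_delta q t"
      using ell_delta_pos[OF q, of t] ell_delta_squared[OF q, of t] q0
      by (simp add: field_simps power2_eq_square) algebra
  qed
  then have "integral {0..pi / 2} (\<lambda>t. - q * (sin t)\<^sup>2 / ell_delta q t) = (ellEc q - ellK q) / q"
    by (rule integral_unique)
  then show ?thesis using ellEc_has_real_derivative_integral[OF q] by (simp only:)
qed

lemma has_integral_inverse_ell_delta_cube:
  assumes q0: "0 < q" and q1: "q < 1"
  shows "((\<lambda>t. 1 / (ell_delta q t) ^ 3) has_integral ellEc q / (1 - q\<^sup>2)) {0..pi / 2}"
proof -
  have q: "\<bar>q\<bar> < 1" using q0 q1 by auto
  have k: "0 < 1 - q\<^sup>2" using q by (simp add: abs_square_less_1)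
  define \<phi>' where "\<phi>' t = (ell_delta q t - (1 - q\<^sup>2) / (ell_delta q t) ^ 3) / q\<^sup>2" for t
  have "((\<lambda>t. sin t * cos t / ell_delta q t) has_real_derivative \<phi>' t) (at t)" for t
  proof -
    have pos: "0 < ell_delta q t" by (rule ell_delta_pos[OF q])
    have d: "((\<lambda>t. sin t * cos t / ell_delta q t) has_real_derivative
        ((cos t * cos t + - sin t * sin t) * ell_delta q t
          - sin t * cos t * (- q\<^sup>2 * sin t * cos t / ell_delta q t)) / (ell_delta q t * ell_delta q t)) (at t)"
      by (rule DERIV_divide[OF DERIV_mult[OF DERIV_sin DERIV_cos] ell_delta_has_real_derivative[OF q]])
        (use pos in simp)
    have "q\<^sup>2 * ((cos t * cos t + - sin t * sin t) * (ell_delta q t)\<^sup>2 + q\<^sup>2 * (sin t)\<^sup>2 * (cos t)\<^sup>2)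
        = (ell_delta q t) ^ 4 - (1 - q\<^sup>2)"
      using ell_delta_squared[OF q, of t] sin_cos_squared_add[of t] by algebra
    then have e: "((cos t * cos t + - sin t * sin t) * ell_delta q t
          - sin t * cos t * (- q\<^sup>2 * sin t * cos t / ell_delta q t)) / (ell_delta q t * ell_delta q t) = \<phi>' t"
      unfolding \<phi>'_def using pos q0 by (simp add: field_simps power2_eq_square power3_eq_cube) algebra
    show ?thesis using d unfolding e .
  qed
  then have "(\<phi>' has_integral 0) {0..pi / 2}"
    using fundamental_theorem_of_calculus[of 0 "pi / 2" "\<lambda>t. sin t * cos t / ell_delta q t" \<phi>']
    by (simp add: has_real_derivative_iff_has_vector_derivative[symmetric] has_field_derivative_at_within)
  then have "((\<lambda>t. (ell_delta q t - q\<^sup>2 * \<phi>' t) / (1 - q\<^sup>2)) has_integral ellEc q / (1 - q\<^sup>2)) {0..pi / 2}"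
    using has_integral_divide[OF has_integral_diff[OF ellEc_has_integral has_integral_mult_right]] by fastforce
  then show ?thesis
  proof (rule has_integral_eq[rotated])
    fix t
    have "q\<^sup>2 * \<phi>' t = ell_delta q t - (1 - q\<^sup>2) / (ell_delta q t) ^ 3"
      unfolding \<phi>'_def using q0 by simp
    then show "(ell_delta q t - q\<^sup>2 * \<phi>' t) / (1 - q\<^sup>2) = 1 / (ell_delta q t) ^ 3"
      using k by simp
  qed
qed

lemma ellK_has_real_derivative:
  assumes q0: "0 < q" and q1: "q < 1"
  shows "(ellK has_real_derivative (ellEc q - (1 - q\<^sup>2) * ellK q) / (q * (1 - q\<^sup>2))) (at q)"
proof -
  have q: "\<bar>q\<bar> < 1" using q0 q1 by auto
  have k: "0 < 1 - q\<^sup>2" using q by (simp add: abs_square_less_1)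
  have "((\<lambda>t. (1 / (ell_delta q t) ^ 3 - 1 / ell_delta q t) / q) has_integral (ellEc q / (1 - q\<^sup>2) - ellK q) / q)
      {0..pi / 2}"
    by (intro has_integral_divide has_integral_diff has_integral_inverse_ell_delta_cube ellK_has_integral q q0 q1)
  then have "((\<lambda>t. q * (sin t)\<^sup>2 / (ell_delta q t) ^ 3) has_integral (ellEc q / (1 - q\<^sup>2) - ellK q) / q)
      {0..pi / 2}"
  proof (rule has_integral_eq[rotated])
    fix t
    show "(1 / (ell_delta q t) ^ 3 - 1 / ell_delta q t) / q = q * (sin t)\<^sup>2 / (ell_delta q t) ^ 3"
      using ell_delta_pos[OF q, of t] ell_delta_squared[OF q, of t] q0
      by (simp add: field_simps power2_eq_square power3_eq_cube) algebra
  qed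
  then have "integral {0..pi / 2} (\<lambda>t. q * (sin t)\<^sup>2 / (ell_delta q t) ^ 3)
      = (ellEc q / (1 - q\<^sup>2) - ellK q) / q"
    by (rule integral_unique)
  also have "\<dots> = (ellEc q - (1 - q\<^sup>2) * ellK q) / (q * (1 - q\<^sup>2))"
    using k q0 by (simp add: field_simps)
  finally show ?thesis using ellK_has_real_derivative_integral[OF q] by simp
qed

lemma ellEc_le_half_pi: "ellEc q \<le> pi / 2"
proof -
  have "ellEc q \<le> integral {0..pi / 2} (\<lambda>t. 1)"
    by (rule has_integral_le[OF ellEc_has_integral integrable_integral])
      (simp_all add: ell_delta_le_1 integrable_continuous_real)
  then show ?thesis by simp
qed

lemma has_integral_affine_sin_squared:
  "((\<lambda>t. a + b * (sin t)\<^sup>2) has_integral a * (pi / 2) + b * (pi / 4)) {0..pi / 2}"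
proof -
  have "((\<lambda>t. (sin t)\<^sup>2) has_integral (\<lambda>t. t / 2 - sin t * cos t / 2) (pi / 2) - (\<lambda>t. t / 2 - sin t * cos t / 2) 0)
      {0..pi / 2}"
  proof (rule fundamental_theorem_of_calculus)
    fix x :: real
    have "((\<lambda>t. t / 2 - sin t * cos t / 2) has_real_derivative 1 / 2 - (cos x * cos x + - sin x * sin x) / 2) (at x)"
      by (intro DERIV_diff DERIV_cdivide DERIV_ident DERIV_mult[OF DERIV_sin DERIV_cos])
    moreover have "1 / 2 - (cos x * cos x + - sin x * sin x) / 2 = (sin x)\<^sup>2"
      using sin_cos_squared_add[of x] by (simp add: power2_eq_square field_simps)
    ultimately show "((\<lambda>t. t / 2 - sin t * cos t / 2) has_vector_derivative (sin x)\<^sup>2) (at x within {0..pi / 2})"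
      unfolding has_real_derivative_iff_has_vector_derivative[symmetric]
      by (simp add: has_field_derivative_at_within)
  qed simp
  moreover have "((\<lambda>t. a) has_integral a * (pi / 2)) {0..pi / 2}"
    using has_integral_const_real[of a 0 "pi / 2"] by (simp add: mult.commute)
  ultimately show ?thesis by (intro has_integral_add has_integral_cmult_real) simp_all
qed

lemma ell_delta_ge_affine_sin_squared:
  assumes "\<bar>q\<bar> < 1"
  shows "1 - (1 - sqrt (1 - q\<^sup>2)) * (sin t)\<^sup>2 \<le> ell_delta q t"
proof -
  define k where "k = sqrt (1 - q\<^sup>2)"
  define x where "x = (sin t)\<^sup>2"
  have qq: "q\<^sup>2 < 1" using assms by (simp add: abs_square_less_1)
  have kk: "k\<^sup>2 = 1 - q\<^sup>2" unfolding k_def using qq by simp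
  have k1: "k \<le> 1" unfolding k_def by simp
  have x0: "0 \<le> x" and x1: "x \<le> 1" unfolding x_def by (simp_all add: abs_square_le_1)
  have xx: "x * x \<le> x" using x0 x1 by (simp add: mult_left_le)
  have "(1 - (1 - k) * x)\<^sup>2 = 1 - 2 * (1 - k) * x + (1 - k)\<^sup>2 * (x * x)"
    by (simp add: power2_eq_square algebra_simps)
  also have "\<dots> \<le> 1 - 2 * (1 - k) * x + (1 - k)\<^sup>2 * x"
    using xx by (intro add_left_mono mult_left_mono) auto
  also have "\<dots> = 1 - q\<^sup>2 * x" using kk by (simp add: power2_eq_square algebra_simps) algebra
  finally show ?thesis unfolding ell_delta_def k_def[symmetric] x_def[symmetric] by (rule real_le_rsqrt)
qed

lemma inverse_ell_delta_le_affine_sin_squared: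
  assumes q: "\<bar>q\<bar> < 1"
  shows "1 / ell_delta q t \<le> 1 + (1 / sqrt (1 - q\<^sup>2) - 1) * (sin t)\<^sup>2"
proof -
  define k where "k = sqrt (1 - q\<^sup>2)"
  define x where "x = (sin t)\<^sup>2"
  have qq: "q\<^sup>2 < 1" using q by (simp add: abs_square_less_1)
  have k0: "0 < k" using qq unfolding k_def by simp
  have k1: "k \<le> 1" unfolding k_def by simp
  have kk: "k\<^sup>2 = 1 - q\<^sup>2" unfolding k_def using qq by simp
  have x0: "0 \<le> x" and x1: "x \<le> 1" unfolding x_def by (simp_all add: abs_square_le_1)
  have D0: "0 < ell_delta q t" by (rule ell_delta_pos[OF q])
  have D2: "(ell_delta q t)\<^sup>2 = 1 - q\<^sup>2 * x" unfolding x_def by (rule ell_delta_squared[OF q])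
  define r where "r = k + (1 - k) * x"
  have r0: "0 < r" unfolding r_def using k0 k1 x0 by (simp add: add_pos_nonneg)
  have "r\<^sup>2 * (1 - (1 - k\<^sup>2) * x) - k\<^sup>2 = (1 - k)\<^sup>2 * x * (1 - x) * (k * (2 + k) + (1 - k\<^sup>2) * x)"
    unfolding r_def by (simp add: power2_eq_square algebra_simps)
  moreover have "0 \<le> (1 - k)\<^sup>2 * x * (1 - x) * (k * (2 + k) + (1 - k\<^sup>2) * x)"
    using x0 x1 k0 k1 by (intro mult_nonneg_nonneg add_nonneg_nonneg) (auto simp: power2_eq_square mult_le_one)
  ultimately have "k\<^sup>2 \<le> (r * ell_delta q t)\<^sup>2" using D2 kk by (simp add: power_mult_distrib)
  then have "k \<le> r * ell_delta q t" using k0 r0 D0 by (simp add: power2_le_iff_abs_le abs_of_pos)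
  then have "1 / ell_delta q t \<le> r / k" using k0 D0 by (simp add: field_simps)
  also have "r / k = 1 + (1 / k - 1) * x" unfolding r_def using k0 by (simp add: field_simps)
  finally show ?thesis unfolding k_def x_def .
qed

lemma ellEc_ge:
  assumes "\<bar>q\<bar> < 1"
  shows "pi / 4 * (1 + sqrt (1 - q\<^sup>2)) \<le> ellEc q"
proof -
  have "1 * (pi / 2) + (- (1 - sqrt (1 - q\<^sup>2))) * (pi / 4) \<le> ellEc q"
    by (rule has_integral_le[OF has_integral_affine_sin_squared ellEc_has_integral])
      (use ell_delta_ge_affine_sin_squared[OF assms] in \<open>simp add: algebra_simps\<close>)
  then show ?thesis by (simp add: algebra_simps)
qed

lemma ellK_le:
  assumes "\<bar>q\<bar> < 1"
  shows "ellK q \<le> pi / 4 * (1 + 1 / sqrt (1 - q\<^sup>2))"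
proof -
  have "ellK q \<le> 1 * (pi / 2) + (1 / sqrt (1 - q\<^sup>2) - 1) * (pi / 4)"
    by (rule has_integral_le[OF ellK_has_integral[OF assms] has_integral_affine_sin_squared])
      (use inverse_ell_delta_le_affine_sin_squared[OF assms] in simp)
  then show ?thesis by (simp add: algebra_simps)
qed

lemma sqrt_one_minus_sq_mult_ellK_le_ellEc:
  assumes "\<bar>q\<bar> < 1"
  shows "sqrt (1 - q\<^sup>2) * ellK q \<le> ellEc q"
proof -
  define k where "k = sqrt (1 - q\<^sup>2)"
  have k0: "0 < k" using assms unfolding k_def by (simp add: abs_square_less_1)
  have "k * ellK q \<le> k * (pi / 4 * (1 + 1 / k))"
    using ellK_le[OF assms] k0 unfolding k_def by simp
  also have "\<dots> = pi / 4 * (1 + k)" using k0 by (simp add: field_simps)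
  finally show ?thesis using ellEc_ge[OF assms] unfolding k_def by linarith
qed

lemma one_minus_sq_mult_ellK_less_ellEc:
  assumes "0 < q" "q < 1"
  shows "(1 - q\<^sup>2) * ellK q < ellEc q"
proof -
  define k where "k = sqrt (1 - q\<^sup>2)"
  have q: "\<bar>q\<bar> < 1" using assms by simp
  have qq: "0 < q\<^sup>2" "q\<^sup>2 < 1" using assms q by (simp_all add: abs_square_less_1)
  have k0: "0 < k" and k1: "k < 1" using qq unfolding k_def by simp_all
  have "0 < pi / 4 * (1 + k)" using k0 by simp
  then have E0: "0 < ellEc q" using ellEc_ge[OF q] unfolding k_def by linarith
  have "(1 - q\<^sup>2) * ellK q = k * (k * ellK q)" unfolding k_def using qq by (simp add: power2_eq_square)
  also have "\<dots> \<le> k * ellEc q"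
    using sqrt_one_minus_sq_mult_ellK_le_ellEc[OF q] k0 unfolding k_def by simp
  also have "\<dots> < ellEc q" using k1 E0 by simp
  finally show ?thesis .
qed

lemma ellK_ge_ln:
  assumes q: "\<bar>q\<bar> < 1"
  shows "ln (sqrt (1 - q\<^sup>2) + pi / 2) - ln (sqrt (1 - q\<^sup>2)) \<le> ellK q"
proof -
  define k where "k = sqrt (1 - q\<^sup>2)"
  have qq: "q\<^sup>2 < 1" using q by (simp add: abs_square_less_1)
  have k0: "0 < k" using qq unfolding k_def by simp
  have kk: "k\<^sup>2 = 1 - q\<^sup>2" unfolding k_def using qq by simp
  define F where "F = (\<lambda>t. - ln (k + pi / 2 - t))"
  have "((\<lambda>t. 1 / (k + pi / 2 - t)) has_integral (F (pi / 2) - F 0)) {0..pi / 2}"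
  proof (rule fundamental_theorem_of_calculus)
    fix x :: real assume "x \<in> {0..pi / 2}"
    then have pos: "0 < k + pi / 2 - x" using k0 by auto
    have inner: "((\<lambda>t. k + pi / 2 - t) has_real_derivative -1) (at x)"
      by (auto intro!: derivative_eq_intros)
    have "(F has_real_derivative - (inverse (k + pi / 2 - x) * -1)) (at x)"
      unfolding F_def by (rule DERIV_minus[OF DERIV_chain2[OF DERIV_ln[OF pos] inner]])
    then show "(F has_vector_derivative 1 / (k + pi / 2 - x)) (at x within {0..pi / 2})"
      unfolding has_real_derivative_iff_has_vector_derivative[symmetric]
      by (simp add: has_field_derivative_at_within inverse_eq_divide)
  qed simp
  then have "F (pi / 2) - F 0 \<le> ellK q"
  proof (rule has_integral_le[OF _ ellK_has_integral[OF q]])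
    fix t :: real assume t: "t \<in> {0..pi / 2}"
    have c0: "0 \<le> cos t" using t by (intro cos_ge_zero) auto
    have D0: "0 < ell_delta q t" by (rule ell_delta_pos[OF q])
    have "(ell_delta q t)\<^sup>2 = k\<^sup>2 + q\<^sup>2 * (cos t)\<^sup>2"
      unfolding ell_delta_squared[OF q] kk using sin_cos_squared_add[of t] by algebra
    also have "\<dots> \<le> k\<^sup>2 + (cos t)\<^sup>2"
      using qq by (intro add_left_mono) (simp add: mult_left_le_one_le)
    also have "\<dots> \<le> (k + cos t)\<^sup>2"
      using k0 c0 by (simp add: power2_eq_square algebra_simps)
    finally have "ell_delta q t \<le> k + cos t"
      using D0 k0 c0 by (simp add: power2_le_iff_abs_le abs_of_pos add_pos_nonneg)
    also have "cos t \<le> pi / 2 - t"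
      using sin_x_le_x[of "pi / 2 - t"] t by (simp add: sin_diff)
    finally show "1 / (k + pi / 2 - t) \<le> 1 / ell_delta q t"
      using D0 by (intro divide_left_mono) auto
  qed
  then show ?thesis unfolding F_def k_def by simp
qed

lemma ellK_unbounded: "\<exists>q. 0 < q \<and> q < 1 \<and> 3 / 4 \<le> q\<^sup>2 \<and> M \<le> ellK q"
proof -
  define k where "k = min (1 / 2) (pi / 2 * exp (- M))"
  have k0: "0 < k" and k2: "k \<le> 1 / 2" and k3: "k \<le> pi / 2 * exp (- M)" unfolding k_def by simp_all
  define q where "q = sqrt (1 - k\<^sup>2)"
  have "k\<^sup>2 \<le> (1 / 2)\<^sup>2" using k0 k2 by (intro power_mono) auto
  then have kk: "k\<^sup>2 \<le> 1 / 4" by (simp add: power2_eq_square)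
  have qsq: "q\<^sup>2 = 1 - k\<^sup>2" unfolding q_def using kk by simp
  have q0: "0 < q" and q1: "q < 1" unfolding q_def using kk k0 by simp_all
  have kq: "sqrt (1 - q\<^sup>2) = k" unfolding qsq using k0 by simp
  have "ln (pi / 2) \<le> ln (k + pi / 2)"
    by (subst ln_le_cancel_iff) (use k0 pi_gt_zero in \<open>auto intro: add_pos_pos\<close>)
  moreover have "ln k \<le> ln (pi / 2) - M"
  proof -
    have "ln k \<le> ln (pi / 2 * exp (- M))" using k0 k3 by simp
    also have "\<dots> = ln (pi / 2) - M" by (subst ln_mult) auto
    finally show ?thesis .
  qed
  ultimately have "M \<le> ln (k + pi / 2) - ln k" by linarith
  also have "\<dots> \<le> ellK q" using ellK_ge_ln[of q] q0 q1 unfolding kq by simp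
  finally show ?thesis using q0 q1 qsq kk by (intro exI[of _ q]) auto
qed

lemma strict_mono_on_if_has_real_derivative_pos:
  fixes f f' :: "real \<Rightarrow> real"
  assumes S: "is_interval S"
    and f': "\<And>x. x \<in> S \<Longrightarrow> (f has_real_derivative f' x) (at x)"
    and pos: "\<And>x. x \<in> interior S \<Longrightarrow> 0 < f' x"
  shows "strict_mono_on S f"
proof (rule strict_mono_onI)
  fix x y assume xy: "x \<in> S" "y \<in> S" "x < y"
  have sub: "{x..y} \<subseteq> S" by (intro subsetI mem_is_interval_1_I[OF S xy(1,2)]) auto
  have int: "{x<..<y} \<subseteq> interior S" using sub by (intro interior_maximal) auto
  show "f x < f y"
  proof (rule DERIV_pos_imp_increasing_open[OF \<open>x < y\<close>])
    fix z assume "x < z" "z < y"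
    then have "z \<in> interior S" "z \<in> S" using int sub by auto
    then show "\<exists>d. (f has_real_derivative d) (at z) \<and> 0 < d"
      using f' pos by blast
  next
    have "(f has_real_derivative f' z) (at z within {x..y})" if "z \<in> {x..y}" for z
      using sub that by (intro has_field_derivative_at_within[OF f']) auto
    then show "continuous_on {x..y} f" by (rule DERIV_continuous_on)
  qed
qed

lemma strict_antimono_on_if_has_real_derivative_neg:
  fixes f f' :: "real \<Rightarrow> real"
  assumes S: "is_interval S"
    and f': "\<And>x. x \<in> S \<Longrightarrow> (f has_real_derivative f' x) (at x)"
    and neg: "\<And>x. x \<in> interior S \<Longrightarrow> f' x < 0"
  shows "strict_antimono_on S f"
proof -
  have "strict_mono_on S (\<lambda>x. - f x)"
  proof (rule strict_mono_on_if_has_real_derivative_pos[of S _ "\<lambda>x. - f' x"])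
    fix x
    show "x \<in> S \<Longrightarrow> ((\<lambda>x. - f x) has_real_derivative - f' x) (at x)" by (rule DERIV_minus[OF f'])
    show "x \<in> interior S \<Longrightarrow> 0 < - f' x" using neg[of x] by simp
  qed (rule S)
  then show ?thesis unfolding monotone_on_def by simp
qed

lemma inverse_sqrt2: "0 < 1 / sqrt (2::real)" "1 / sqrt (2::real) < 1" "(1 / sqrt (2::real))\<^sup>2 = 1 / 2"
  by (simp_all add: power_divide)

lemma pos_if_inverse_sqrt2_le: "1 / sqrt 2 \<le> q \<Longrightarrow> 0 < q"
  using inverse_sqrt2(1) by linarith

lemma half_less_sq_if_inverse_sqrt2_less: "1 / sqrt 2 < q \<Longrightarrow> 1 / 2 < q\<^sup>2"
  using power_strict_mono[of "1 / sqrt 2" q 2] inverse_sqrt2 by simp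

lemma half_le_sq_if_inverse_sqrt2_le: "1 / sqrt 2 \<le> q \<Longrightarrow> 1 / 2 \<le> q\<^sup>2"
  using power_mono[of "1 / sqrt 2" q 2] inverse_sqrt2 by simp

definition twoE_minus_K :: "real \<Rightarrow> real" where
  "twoE_minus_K q = 2 * ellEc q - ellK q"

lemma twoE_minus_K_has_real_derivative:
  assumes "0 < q" "q < 1"
  shows "(twoE_minus_K has_real_derivative
      2 * ((ellEc q - ellK q) / q) - (ellEc q - (1 - q\<^sup>2) * ellK q) / (q * (1 - q\<^sup>2))) (at q)"
  unfolding twoE_minus_K_def[abs_def]
  by (intro DERIV_diff DERIV_cmult ellEc_has_real_derivative ellK_has_real_derivative assms)

lemma continuous_on_twoE_minus_K: "continuous_on {0<..<1} twoE_minus_K"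
  by (rule DERIV_continuous_on[OF has_field_derivative_at_within[OF twoE_minus_K_has_real_derivative]]) auto

lemma twoE_minus_K_strict_antimono: "strict_antimono_on {0<..<1} twoE_minus_K"
proof (rule strict_antimono_on_if_has_real_derivative_neg[OF _ twoE_minus_K_has_real_derivative])
  fix q :: real assume "q \<in> interior {0<..<1}"
  then have q: "0 < q" "q < 1" by auto
  have "ellEc q \<le> ellK q" using ellEc_le_half_pi[of q] ellK_ge_half_pi[of q] q by simp
  then have "(ellEc q - ellK q) / q \<le> 0" using q by (simp add: divide_nonpos_pos)
  moreover have "0 < (ellEc q - (1 - q\<^sup>2) * ellK q) / (q * (1 - q\<^sup>2))"
    using one_minus_sq_mult_ellK_less_ellEc[OF q] q by (simp add: abs_square_less_1)
  ultimately show "2 * ((ellEc q - ellK q) / q) - (ellEc q - (1 - q\<^sup>2) * ellK q) / (q * (1 - q\<^sup>2)) < 0"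
    by linarith
qed auto

lemma twoE_minus_K_inverse_sqrt2: "pi / 4 \<le> twoE_minus_K (1 / sqrt 2)"
proof -
  have q: "\<bar>1 / sqrt 2\<bar> < (1::real)" by (simp add: field_simps)
  have k: "sqrt (1 - (1 / sqrt 2)\<^sup>2) = 1 / sqrt (2::real)"
    by (simp add: power_divide real_sqrt_divide)
  have "2 * (pi / 4 * (1 + 1 / sqrt 2)) - pi / 4 * (1 + 1 / (1 / sqrt 2)) = pi / 4"
    by (simp add: field_simps)
  then show ?thesis
    using ellEc_ge[OF q] ellK_le[OF q] unfolding k twoE_minus_K_def by linarith
qed

lemma twoE_minus_K_unbounded_below: "\<exists>q. 0 < q \<and> q < 1 \<and> 3 / 4 \<le> q\<^sup>2 \<and> twoE_minus_K q \<le> - M"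
proof -
  obtain q where q: "0 < q" "q < 1" "3 / 4 \<le> q\<^sup>2" "M + pi \<le> ellK q"
    using ellK_unbounded[of "M + pi"] by blast
  then show ?thesis using ellEc_le_half_pi[of q] unfolding twoE_minus_K_def by (intro exI[of _ q]) auto
qed

lemma q_star_eq_the_inv_into: "q_star = the_inv_into {0<..<1} twoE_minus_K 0"
  by (simp add: q_star_def the_inv_into_def twoE_minus_K_def conj_assoc)

lemma q_star:
  shows q_star_gt: "1 / sqrt 2 < q_star" and q_star_less_1: "q_star < 1"
    and twoE_minus_K_q_star: "twoE_minus_K q_star = 0"
proof -
  note mono = twoE_minus_K_strict_antimono
  obtain qb where qb: "0 < qb" "qb < 1" "twoE_minus_K qb \<le> - 1"
    using twoE_minus_K_unbounded_below[of 1] by blast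
  have D_isqrt2: "0 < twoE_minus_K (1 / sqrt 2)" using twoE_minus_K_inverse_sqrt2 pi_gt_zero by linarith
  have lt: "1 / sqrt 2 < qb"
  proof (rule ccontr)
    assume "\<not> 1 / sqrt 2 < qb"
    then have "qb \<le> 1 / sqrt 2" by simp
    then have "twoE_minus_K (1 / sqrt 2) \<le> twoE_minus_K qb"
      using monotone_onD[OF mono, of qb "1 / sqrt 2"] qb inverse_sqrt2
      by (cases "qb = 1 / sqrt 2") (simp_all add: less_imp_le)
    then show False using D_isqrt2 qb by linarith
  qed
  have cont: "continuous_on {1 / sqrt 2..qb} twoE_minus_K"
    using continuous_on_twoE_minus_K by (rule continuous_on_subset)
      (use qb(2) pos_if_inverse_sqrt2_le in \<open>auto simp: subset_eq\<close>)
  have "\<exists>z. 1 / sqrt 2 \<le> z \<and> z \<le> qb \<and> twoE_minus_K z = 0"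
    by (rule IVT2'[OF _ _ _ cont]) (use qb D_isqrt2 lt in linarith)+
  then obtain z where z: "1 / sqrt 2 \<le> z" "z \<le> qb" "twoE_minus_K z = 0" by blast
  have "z \<noteq> 1 / sqrt 2" using z D_isqrt2 by auto
  then have z_in: "z \<in> {0<..<1}" and z_gt: "1 / sqrt 2 < z"
    using z qb pos_if_inverse_sqrt2_le[OF z(1)] by auto
  have "q_star = z" unfolding q_star_eq_the_inv_into
    using mono z(3) z_in by (intro the_inv_into_f_eq) (simp_all add: strict_antimono_iff_antimono)
  then show "1 / sqrt 2 < q_star" "q_star < 1" "twoE_minus_K q_star = 0" using z_in z_gt z by auto
qed

lemma twoE_minus_K_pos: "0 < q \<Longrightarrow> q < q_star \<Longrightarrow> 0 < twoE_minus_K q"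
  using monotone_onD[OF twoE_minus_K_strict_antimono, of q q_star] q_star_less_1 twoE_minus_K_q_star
  by simp

lemma twoE_minus_K_neg: "q_star < q \<Longrightarrow> q < 1 \<Longrightarrow> twoE_minus_K q < 0"
  using monotone_onD[OF twoE_minus_K_strict_antimono, of q_star q] q_star_gt inverse_sqrt2(1)
    twoE_minus_K_q_star by simp

lemma ellEc_pos:
  assumes "\<bar>q\<bar> < 1"
  shows "0 < ellEc q"
proof -
  have "0 \<le> 1 - q\<^sup>2" using assms by (simp add: abs_square_less_1 less_imp_le)
  then have "0 < pi / 4 * (1 + sqrt (1 - q\<^sup>2))" by (intro mult_pos_pos add_pos_nonneg) simp_all
  then show ?thesis using ellEc_ge[OF assms] by linarith
qed

definition f_aux_E_coeff :: "real \<Rightarrow> real" where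
  "f_aux_E_coeff q = - 8 * q ^ 4 + 8 * q\<^sup>2 - 1"

lemma f_aux_has_real_derivative:
  assumes q0: "0 < q" and q1: "q < 1"
  shows "(f_aux has_real_derivative q * ((20 * q\<^sup>2 - 13) * ellK q - 20 * (2 * q\<^sup>2 - 1) * ellEc q)) (at q)"
proof -
  have "q\<^sup>2 < 1" using q0 q1 by (simp add: abs_square_less_1)
  then have k: "1 - q\<^sup>2 \<noteq> 0" by simp
  have dp1: "((\<lambda>q. 4 * q ^ 4 - 5 * q\<^sup>2 + 1) has_real_derivative 16 * q ^ 3 - 10 * q) (at q)"
    by (auto intro!: derivative_eq_intros simp: power2_eq_square power3_eq_cube)
  have dp2: "((\<lambda>q. - 8 * q ^ 4 + 8 * q\<^sup>2 - 1) has_real_derivative - 32 * q ^ 3 + 16 * q) (at q)"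
    by (auto intro!: derivative_eq_intros simp: power2_eq_square power3_eq_cube)
  note d = DERIV_add[OF DERIV_mult[OF dp1 ellK_has_real_derivative[OF q0 q1]]
      DERIV_mult[OF dp2 ellEc_has_real_derivative[OF q0 q1]]]
  have e: "(16 * q ^ 3 - 10 * q) * ellK q + (ellEc q - (1 - q\<^sup>2) * ellK q) / (q * (1 - q\<^sup>2)) * (4 * q ^ 4 - 5 * q\<^sup>2 + 1)
    + ((- 32 * q ^ 3 + 16 * q) * ellEc q + (ellEc q - ellK q) / q * (- 8 * q ^ 4 + 8 * q\<^sup>2 - 1))
    = q * ((20 * q\<^sup>2 - 13) * ellK q - 20 * (2 * q\<^sup>2 - 1) * ellEc q)"
    using q0 k by (simp add: field_simps) algebra
  show ?thesis using d unfolding e f_aux_def[abs_def] .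
qed

lemma continuous_on_f_aux: "continuous_on {0<..<1} f_aux"
  by (rule DERIV_continuous_on[OF has_field_derivative_at_within[OF f_aux_has_real_derivative]]) auto

lemma f_aux_inverse_sqrt2: "0 < f_aux (1 / sqrt 2)"
proof -
  have "(1 / sqrt 2) ^ 4 = ((1 / sqrt 2)\<^sup>2)\<^sup>2" by (simp flip: power_mult)
  then have q4: "(1 / sqrt 2) ^ 4 = (1 / 4 :: real)" unfolding inverse_sqrt2(3) by (simp add: power2_eq_square)
  have "f_aux (1 / sqrt 2) = twoE_minus_K (1 / sqrt 2) / 2"
    unfolding f_aux_def twoE_minus_K_def inverse_sqrt2(3) q4 by (simp add: field_simps)
  then show ?thesis using twoE_minus_K_inverse_sqrt2 pi_gt_zero by linarith
qed

lemma f_aux_neg_if_E_coeff_nonpos: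
  assumes q: "0 < q" "q < 1" and h: "1 / 2 \<le> q\<^sup>2" and b: "f_aux_E_coeff q \<le> 0"
  shows "f_aux q < 0"
proof -
  have "4 * q ^ 4 - 5 * q\<^sup>2 + 1 = (4 * q\<^sup>2 - 1) * (q\<^sup>2 - 1)"
    by (simp add: algebra_simps power2_eq_square power4_eq_xxxx)
  moreover have "(4 * q\<^sup>2 - 1) * (q\<^sup>2 - 1) < 0"
    using h q by (intro mult_pos_neg) (auto simp: abs_square_less_1)
  ultimately have "(4 * q ^ 4 - 5 * q\<^sup>2 + 1) * ellK q < 0"
    using ellK_pos[of q] q by (simp add: mult_neg_pos)
  moreover have "(- 8 * q ^ 4 + 8 * q\<^sup>2 - 1) * ellEc q \<le> 0"
    using b ellEc_pos[of q] q unfolding f_aux_E_coeff_def by (simp add: mult_nonpos_nonneg)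
  ultimately show ?thesis unfolding f_aux_def by linarith
qed

lemma f_aux_derivative_polynomial_bound:
  fixes p :: real
  assumes p: "13 / 20 \<le> p" and b: "8 * p\<^sup>2 - 8 * p + 1 \<le> 0"
  shows "(20 * p - 13)\<^sup>2 < 400 * (2 * p - 1)\<^sup>2 * (1 - p)"
proof -
  define u where "u = p - 1 / 2"
  have p_eq: "p = u + 1 / 2" unfolding u_def by simp
  have u0: "3 / 20 \<le> u" using p unfolding u_def by simp
  have uu: "u\<^sup>2 \<le> 1 / 8" using b unfolding p_eq by (simp add: power2_eq_square algebra_simps)
  have u1: "u \<le> 9 / 25"
  proof (rule ccontr)
    assume "\<not> u \<le> 9 / 25"
    then have "(9 / 25)\<^sup>2 < u\<^sup>2" by (intro power_strict_mono) auto
    with uu show False by (simp add: power2_eq_square)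
  qed
  have cube: "u * (u * u) \<le> 9 / 25 * (u * u)" by (rule mult_right_mono[OF u1]) simp
  have "0 \<le> (u - 3 / 20) * (9 / 25 - u)" using u0 u1 by simp
  also have "(u - 3 / 20) * (9 / 25 - u) = 51 / 100 * u - u * u - 27 / 500" by (simp add: field_simps)
  finally have square: "u * u \<le> 51 / 100 * u - 27 / 500" by simp
  have "400 * (2 * p - 1)\<^sup>2 * (1 - p) - (20 * p - 13)\<^sup>2 = 400 * (u * u) + 120 * u - 9 - 1600 * (u * (u * u))"
    unfolding p_eq by (simp add: power2_eq_square algebra_simps)
  then show ?thesis using cube square u0 by linarith
qed

lemma f_aux_derivative_neg_if_E_coeff_nonneg:
  assumes q0: "0 < q" and q1: "q < 1" and h: "1 / 2 \<le> q\<^sup>2" and b: "0 \<le> f_aux_E_coeff q"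
  shows "q * ((20 * q\<^sup>2 - 13) * ellK q - 20 * (2 * q\<^sup>2 - 1) * ellEc q) < 0"
proof -
  define p where "p = q\<^sup>2"
  define k where "k = sqrt (1 - p)"
  have q: "\<bar>q\<bar> < 1" using q0 q1 by simp
  have p1: "p < 1" unfolding p_def using q by (simp add: abs_square_less_1)
  have k0: "0 < k" unfolding k_def using p1 by simp
  have kK: "k * ellK q \<le> ellEc q" using sqrt_one_minus_sq_mult_ellK_le_ellEc[OF q] unfolding k_def p_def .
  have "(20 * p - 13) * ellK q - 20 * (2 * p - 1) * ellEc q < 0"
  proof (cases "20 * p - 13 < 0")
    case True
    then have "(20 * p - 13) * ellK q < 0" using ellK_pos[OF q] by (simp add: mult_neg_pos)
    moreover have "0 \<le> 20 * (2 * p - 1) * ellEc q" using h ellEc_pos[OF q] unfolding p_def by simp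
    ultimately show ?thesis by linarith
  next
    case False
    have "(20 * p - 13)\<^sup>2 < (20 * (2 * p - 1) * k)\<^sup>2"
      using f_aux_derivative_polynomial_bound[of p] False b p1
      unfolding power_mult_distrib k_def f_aux_E_coeff_def p_def
      by (simp add: power2_eq_square power4_eq_xxxx algebra_simps)
    then have lt: "20 * p - 13 < 20 * (2 * p - 1) * k"
      by (rule power2_less_imp_less) (use False k0 in simp)
    have "k * ((20 * p - 13) * ellK q - 20 * (2 * p - 1) * ellEc q)
        = (20 * p - 13) * (k * ellK q) - 20 * (2 * p - 1) * k * ellEc q" by (simp add: algebra_simps)
    also have "\<dots> \<le> (20 * p - 13) * ellEc q - 20 * (2 * p - 1) * k * ellEc q"
      using kK False by (simp add: mult_left_mono)
    also have "\<dots> = ellEc q * ((20 * p - 13) - 20 * (2 * p - 1) * k)" by (simp add: algebra_simps)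
    also have "\<dots> < 0" using ellEc_pos[OF q] lt by (simp add: mult_pos_neg)
    finally show ?thesis using k0 by (simp add: mult_less_0_iff)
  qed
  then show ?thesis using q0 unfolding p_def by (simp add: mult_pos_neg)
qed

lemma f_aux_E_coeff_antimono:
  assumes "0 < x" "1 / 2 \<le> x\<^sup>2" "x \<le> y"
  shows "f_aux_E_coeff y \<le> f_aux_E_coeff x"
proof -
  have xy: "x\<^sup>2 \<le> y\<^sup>2" using assms by (intro power_mono) auto
  have "0 \<le> y\<^sup>2 - x\<^sup>2" using xy by simp
  moreover have "8 - 8 * (y\<^sup>2 + x\<^sup>2) \<le> 0" using xy assms(2) by simp
  ultimately have "(y\<^sup>2 - x\<^sup>2) * (8 - 8 * (y\<^sup>2 + x\<^sup>2)) \<le> 0" by (rule mult_nonneg_nonpos)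
  moreover have "f_aux_E_coeff y - f_aux_E_coeff x = (y\<^sup>2 - x\<^sup>2) * (8 - 8 * (y\<^sup>2 + x\<^sup>2))"
    unfolding f_aux_E_coeff_def by (simp add: algebra_simps power2_eq_square power4_eq_xxxx)
  ultimately show ?thesis by linarith
qed

lemma f_aux_strict_decreasing:
  assumes x: "1 / sqrt 2 \<le> x" and xy: "x < y" and y: "y < 1" and b: "0 \<le> f_aux_E_coeff y"
  shows "f_aux y < f_aux x"
proof (rule DERIV_neg_imp_decreasing[OF xy])
  fix z assume z: "x \<le> z" "z \<le> y"
  have z0: "0 < z" using pos_if_inverse_sqrt2_le[OF x] z by linarith
  have z1: "z < 1" using z y by linarith
  have hz: "1 / 2 \<le> z\<^sup>2" by (rule half_le_sq_if_inverse_sqrt2_le) (use x z in linarith)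
  have "0 \<le> f_aux_E_coeff z" using b f_aux_E_coeff_antimono[OF z0 hz z(2)] by linarith
  then show "\<exists>d. (f_aux has_real_derivative d) (at z) \<and> d < 0"
    using f_aux_has_real_derivative[OF z0 z1] f_aux_derivative_neg_if_E_coeff_nonneg[OF z0 z1 hz] by blast
qed

lemma f_aux_sign_change:
  obtains z where "1 / sqrt 2 < z" "z < 1" "f_aux z = 0"
    "\<And>q. 1 / sqrt 2 \<le> q \<Longrightarrow> q < z \<Longrightarrow> 0 < f_aux q"
    "\<And>q. z < q \<Longrightarrow> q < 1 \<Longrightarrow> f_aux q < 0"
proof -
  have h: "1 / 2 \<le> (19 / 20 :: real)\<^sup>2" by (simp add: power2_eq_square)
  have b: "f_aux_E_coeff (19 / 20) < 0" unfolding f_aux_E_coeff_def by (simp add: power2_eq_square power4_eq_xxxx)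
  have f_end: "f_aux (19 / 20) < 0" by (rule f_aux_neg_if_E_coeff_nonpos) (use h b in auto)
  have end_gt: "1 / sqrt 2 < (19 / 20 :: real)"
    by (rule power_less_imp_less_base[of _ 2]) (simp_all add: inverse_sqrt2(3) power2_eq_square)
  have "continuous_on {1 / sqrt 2..19 / 20} f_aux"
    using continuous_on_f_aux by (rule continuous_on_subset) (use pos_if_inverse_sqrt2_le in \<open>auto simp: subset_eq\<close>)
  then have "\<exists>z. 1 / sqrt 2 \<le> z \<and> z \<le> 19 / 20 \<and> f_aux z = 0"
    by (rule IVT2'[rotated 3]) (use f_end f_aux_inverse_sqrt2 end_gt in linarith)+
  then obtain z where z: "1 / sqrt 2 \<le> z" "z \<le> 19 / 20" "f_aux z = 0" by blast
  have z0: "0 < z" and z1: "z < 1" using pos_if_inverse_sqrt2_le[OF z(1)] z(2) by linarith+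
  have bz: "0 \<le> f_aux_E_coeff z"
    using f_aux_neg_if_E_coeff_nonpos[OF z0 z1 half_le_sq_if_inverse_sqrt2_le[OF z(1)]] z(3) by force
  show thesis
  proof
    show "1 / sqrt 2 < z" using z(1,3) f_aux_inverse_sqrt2 by (cases "z = 1 / sqrt 2") auto
    show "0 < f_aux q" if "1 / sqrt 2 \<le> q" "q < z" for q
      using f_aux_strict_decreasing[OF that z1 bz] z(3) by simp
    show "f_aux q < 0" if q: "z < q" "q < 1" for q
    proof (cases "0 \<le> f_aux_E_coeff q")
      case True
      then show ?thesis using f_aux_strict_decreasing[OF z(1) q True] z(3) by simp
    next
      case False
      have "0 < q" "1 / 2 \<le> q\<^sup>2" using z0 q half_le_sq_if_inverse_sqrt2_le[of q] z(1) by auto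
      then show ?thesis using f_aux_neg_if_E_coeff_nonpos[of q] q False by simp
    qed
  qed (use z1 z(3) in auto)
qed

lemma q_hat:
  shows q_hat_gt: "1 / sqrt 2 < q_hat" and q_hat_less_1: "q_hat < 1" and f_aux_q_hat: "f_aux q_hat = 0"
    and f_aux_pos: "\<And>q. 1 / sqrt 2 \<le> q \<Longrightarrow> q < q_hat \<Longrightarrow> 0 < f_aux q"
    and f_aux_neg: "\<And>q. q_hat < q \<Longrightarrow> q < 1 \<Longrightarrow> f_aux q < 0"
proof -
  obtain z where z: "1 / sqrt 2 < z" "z < 1" "f_aux z = 0"
    and pos: "\<And>q. 1 / sqrt 2 \<le> q \<Longrightarrow> q < z \<Longrightarrow> 0 < f_aux q"
    and neg: "\<And>q. z < q \<Longrightarrow> q < 1 \<Longrightarrow> f_aux q < 0"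
    by (rule f_aux_sign_change) (rule that)
  have "q_hat = z" unfolding q_hat_def
  proof (rule the_equality)
    show "1 / sqrt 2 \<le> z \<and> z < 1 \<and> f_aux z = 0" using z by simp
    fix w assume "1 / sqrt 2 \<le> w \<and> w < 1 \<and> f_aux w = 0"
    then show "w = z" using pos[of w] neg[of w] by (cases w z rule: linorder_cases) auto
  qed
  then show "1 / sqrt 2 < q_hat" "q_hat < 1" "f_aux q_hat = 0"
    "\<And>q. 1 / sqrt 2 \<le> q \<Longrightarrow> q < q_hat \<Longrightarrow> 0 < f_aux q"
    "\<And>q. q_hat < q \<Longrightarrow> q < 1 \<Longrightarrow> f_aux q < 0"
    using z pos neg by auto
qed

lemma q_hat_less_q_star: "q_hat < q_star"
proof (rule ccontr)
  assume "\<not> q_hat < q_star"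
  then have "q_star \<le> q_hat" by simp
  have "ellK q_star = 2 * ellEc q_star" using twoE_minus_K_q_star unfolding twoE_minus_K_def by simp
  then have "f_aux q_star = ellEc q_star * (1 - 2 * q_star\<^sup>2)"
    unfolding f_aux_def by (simp add: algebra_simps)
  moreover have "1 - 2 * q_star\<^sup>2 < 0" using half_less_sq_if_inverse_sqrt2_less[OF q_star_gt] by simp
  moreover have "0 < ellEc q_star" using q_star_gt q_star_less_1 pos_if_inverse_sqrt2_le
    by (intro ellEc_pos) (simp add: less_imp_le)
  ultimately have "f_aux q_star < 0" by (simp add: mult_pos_neg)
  moreover have "0 \<le> f_aux q_star"
    using f_aux_pos[of q_star] f_aux_q_hat q_star_gt \<open>q_star \<le> q_hat\<close> by (cases "q_star = q_hat") auto
  ultimately show False by simp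
qed

lemma g_aux_has_real_derivative:
  assumes q0: "0 < q" and q1: "q < 1"
  shows "(g_aux has_real_derivative 16 * twoE_minus_K q * f_aux q / (q * (1 - q\<^sup>2))) (at q)"
proof -
  have "q\<^sup>2 < 1" using q0 q1 by (simp add: abs_square_less_1)
  then have k: "1 - q\<^sup>2 \<noteq> 0" by simp
  define a where "a = (ellEc q - ellK q) / q"
  define b where "b = (ellEc q - (1 - q\<^sup>2) * ellK q) / (q * (1 - q\<^sup>2))"
  have ha: "a * q = ellEc q - ellK q" unfolding a_def using q0 by simp
  have hb: "b * (q * (1 - q\<^sup>2)) = ellEc q - (1 - q\<^sup>2) * ellK q" unfolding b_def using q0 k by simp
  have g_eq: "g_aux = (\<lambda>q. 8 * (twoE_minus_K q * twoE_minus_K q) * (2 * q * q - 1))"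
    unfolding g_aux_def[abs_def] twoE_minus_K_def by (simp add: power2_eq_square mult.assoc)
  have dp: "((\<lambda>q. 2 * q * q - 1) has_real_derivative 4 * q) (at q)"
    by (auto intro!: derivative_eq_intros)
  note dD = twoE_minus_K_has_real_derivative[OF q0 q1, folded a_def b_def]
  note d = DERIV_mult[OF DERIV_cmult[OF DERIV_mult[OF dD dD], of 8] dp]
  have "(8 * ((2 * a - b) * twoE_minus_K q + (2 * a - b) * twoE_minus_K q) * (2 * q * q - 1)
      + 4 * q * (8 * (twoE_minus_K q * twoE_minus_K q))) * (q * (1 - q\<^sup>2))
      = 16 * twoE_minus_K q * f_aux q"
    unfolding f_aux_def twoE_minus_K_def using ha hb by algebra
  then have "8 * ((2 * a - b) * twoE_minus_K q + (2 * a - b) * twoE_minus_K q) * (2 * q * q - 1)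
      + 4 * q * (8 * (twoE_minus_K q * twoE_minus_K q)) = 16 * twoE_minus_K q * f_aux q / (q * (1 - q\<^sup>2))"
    using q0 k by (simp add: eq_divide_eq)
  then show ?thesis using d unfolding g_eq by simp
qed

lemma g_aux_inverse_sqrt2: "g_aux (1 / sqrt 2) = 0"
  unfolding g_aux_def using inverse_sqrt2(3) by simp

lemma g_aux_q_star: "g_aux q_star = 0"
  unfolding g_aux_def using twoE_minus_K_q_star unfolding twoE_minus_K_def by simp

lemma continuous_on_g_aux: "continuous_on {0<..<1} g_aux"
  by (rule DERIV_continuous_on[OF has_field_derivative_at_within[OF g_aux_has_real_derivative]]) auto

lemma g_aux_strict_mono_below_q_hat: "strict_mono_on {1 / sqrt 2..q_hat} g_aux"
proof (rule strict_mono_on_if_has_real_derivative_pos[OF _ g_aux_has_real_derivative])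
  fix q assume "q \<in> interior {1 / sqrt 2..q_hat}"
  then have q: "1 / sqrt 2 < q" "q < q_hat" by auto
  have "0 < q" "q < 1" using q pos_if_inverse_sqrt2_le q_hat_less_1 by force+
  moreover have "0 < twoE_minus_K q" using q q_hat_less_q_star \<open>0 < q\<close> by (intro twoE_minus_K_pos) auto
  moreover have "0 < f_aux q" using q by (intro f_aux_pos) auto
  ultimately show "0 < 16 * twoE_minus_K q * f_aux q / (q * (1 - q\<^sup>2))"
    by (simp add: abs_square_less_1)
qed (use pos_if_inverse_sqrt2_le q_hat_less_1 in force)+

lemma g_aux_strict_antimono_between: "strict_antimono_on {q_hat..q_star} g_aux"
proof (rule strict_antimono_on_if_has_real_derivative_neg[OF _ g_aux_has_real_derivative])
  fix q assume "q \<in> interior {q_hat..q_star}"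
  then have q: "q_hat < q" "q < q_star" by auto
  have "0 < q" "q < 1" using q q_hat_gt pos_if_inverse_sqrt2_le q_star_less_1 by force+
  moreover have "0 < twoE_minus_K q" using q \<open>0 < q\<close> by (intro twoE_minus_K_pos) auto
  moreover have "f_aux q < 0" using q \<open>q < 1\<close> by (intro f_aux_neg) auto
  ultimately show "16 * twoE_minus_K q * f_aux q / (q * (1 - q\<^sup>2)) < 0"
    by (simp add: abs_square_less_1 mult_pos_neg divide_neg_pos)
qed (use q_hat_gt pos_if_inverse_sqrt2_le q_star_less_1 in force)+

lemma g_aux_strict_mono_above_q_star: "strict_mono_on {q_star..<1} g_aux"
proof (rule strict_mono_on_if_has_real_derivative_pos[OF _ g_aux_has_real_derivative])
  fix q assume "q \<in> interior {q_star..<1}"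
  then have q: "q_star < q" "q < 1" by auto
  have "0 < q" using q q_star_gt pos_if_inverse_sqrt2_le by force
  moreover have "twoE_minus_K q < 0" using q by (intro twoE_minus_K_neg) auto
  moreover have "f_aux q < 0" using q q_hat_less_q_star by (intro f_aux_neg) auto
  ultimately show "0 < 16 * twoE_minus_K q * f_aux q / (q * (1 - q\<^sup>2))"
    using q by (simp add: abs_square_less_1 mult_neg_neg)
qed (use q_star_gt pos_if_inverse_sqrt2_le in force)+

lemma lambda_hat_pos: "0 < lambda_hat"
  using monotone_onD[OF g_aux_strict_mono_below_q_hat, of "1 / sqrt 2" q_hat] q_hat_gt g_aux_inverse_sqrt2
  unfolding lambda_hat_def by simp

lemma g_aux_unbounded: "\<exists>q. q_star < q \<and> q < 1 \<and> c < g_aux q"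
proof -
  obtain q where q: "0 < q" "q < 1" "3 / 4 \<le> q\<^sup>2" "twoE_minus_K q \<le> - (sqrt \<bar>c\<bar> + 1)"
    using twoE_minus_K_unbounded_below by blast
  have "(sqrt \<bar>c\<bar> + 1)\<^sup>2 \<le> (twoE_minus_K q)\<^sup>2"
    using q(4) by (subst abs_le_square_iff[symmetric]) auto
  moreover have "\<bar>c\<bar> < (sqrt \<bar>c\<bar> + 1)\<^sup>2"
    using real_sqrt_ge_zero[of "\<bar>c\<bar>"] by (simp add: power2_eq_square algebra_simps add_pos_nonneg)
  moreover have "(twoE_minus_K q)\<^sup>2 \<le> g_aux q"
    using q(3) mult_right_mono[of 1 "8 * (2 * q\<^sup>2 - 1)" "(twoE_minus_K q)\<^sup>2"]
    unfolding g_aux_def twoE_minus_K_def by (simp add: algebra_simps)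
  moreover have "twoE_minus_K q < 0" using q(4) real_sqrt_ge_zero[of "\<bar>c\<bar>"] by linarith
  then have "q_star < q"
    using twoE_minus_K_pos[OF q(1)] twoE_minus_K_q_star by (cases q q_star rule: linorder_cases) auto
  ultimately show ?thesis using q(2) by (intro exI[of _ q]) auto
qed

lemma q1:
  assumes "0 < c" "c \<le> lambda_hat"
  shows "q1 c \<in> {1 / sqrt 2<..q_hat}" "g_aux (q1 c) = c"
proof -
  have "continuous_on {1 / sqrt 2..q_hat} g_aux"
    using continuous_on_g_aux by (rule continuous_on_subset)
      (use pos_if_inverse_sqrt2_le q_hat_less_1 in \<open>auto simp: subset_eq\<close>)
  then obtain z where z: "1 / sqrt 2 \<le> z" "z \<le> q_hat" "g_aux z = c"
    using IVT'[of g_aux "1 / sqrt 2" c q_hat] g_aux_inverse_sqrt2 assms q_hat_gt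
    unfolding lambda_hat_def by auto
  moreover have "z \<noteq> 1 / sqrt 2" using z(3) g_aux_inverse_sqrt2 assms(1) by auto
  ultimately have z_in: "z \<in> {1 / sqrt 2<..q_hat}" by auto
  have inj: "inj_on g_aux {1 / sqrt 2<..q_hat}"
    using strict_mono_on_imp_inj_on[OF g_aux_strict_mono_below_q_hat] by (rule inj_on_subset) auto
  have "q1 c = the_inv_into {1 / sqrt 2<..q_hat} g_aux c"
    by (simp add: q1_def the_inv_into_def conj_assoc)
  also have "\<dots> = z" by (rule the_inv_into_f_eq[OF inj z(3) z_in])
  finally show "q1 c \<in> {1 / sqrt 2<..q_hat}" "g_aux (q1 c) = c" using z_in z(3) by simp_all
qed

lemma q2:
  assumes "0 < c" "c \<le> lambda_hat"
  shows "q2 c \<in> {q_hat..<q_star}" "g_aux (q2 c) = c"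
proof -
  have "continuous_on {q_hat..q_star} g_aux"
    using continuous_on_g_aux by (rule continuous_on_subset)
      (use q_hat_gt pos_if_inverse_sqrt2_le q_star_less_1 in \<open>force simp: subset_eq\<close>)
  then obtain z where z: "q_hat \<le> z" "z \<le> q_star" "g_aux z = c"
    using IVT2'[of g_aux q_star c q_hat] g_aux_q_star assms q_hat_less_q_star
    unfolding lambda_hat_def by auto
  moreover have "z \<noteq> q_star" using z(3) g_aux_q_star assms(1) by auto
  ultimately have z_in: "z \<in> {q_hat..<q_star}" by auto
  have "inj_on g_aux {q_hat..q_star}"
    using g_aux_strict_antimono_between by (simp add: strict_antimono_iff_antimono)
  then have inj: "inj_on g_aux {q_hat..<q_star}" by (rule inj_on_subset) auto
  have "q2 c = the_inv_into {q_hat..<q_star} g_aux c"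
    by (simp add: q2_def the_inv_into_def conj_assoc)
  also have "\<dots> = z" by (rule the_inv_into_f_eq[OF inj z(3) z_in])
  finally show "q2 c \<in> {q_hat..<q_star}" "g_aux (q2 c) = c" using z_in z(3) by simp_all
qed

lemma q3:
  assumes "0 < c"
  shows "q3 c \<in> {q_star<..<1}" "g_aux (q3 c) = c"
proof -
  obtain b where b: "q_star < b" "b < 1" "c < g_aux b" using g_aux_unbounded by blast
  have "continuous_on {q_star..b} g_aux"
    using continuous_on_g_aux by (rule continuous_on_subset)
      (use b q_star_gt pos_if_inverse_sqrt2_le in \<open>force simp: subset_eq\<close>)
  then obtain z where z: "q_star \<le> z" "z \<le> b" "g_aux z = c"
    using IVT'[of g_aux q_star c b] g_aux_q_star assms b by auto
  moreover have "z \<noteq> q_star" using z(3) g_aux_q_star assms(1) by auto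
  ultimately have z_in: "z \<in> {q_star<..<1}" using b(2) by auto
  have inj: "inj_on g_aux {q_star<..<1}"
    using strict_mono_on_imp_inj_on[OF g_aux_strict_mono_above_q_star] by (rule inj_on_subset) auto
  have "q3 c = the_inv_into {q_star<..<1} g_aux c"
    by (simp add: q3_def the_inv_into_def conj_assoc)
  also have "\<dots> = z" by (rule the_inv_into_f_eq[OF inj z(3) z_in])
  finally show "q3 c \<in> {q_star<..<1}" "g_aux (q3 c) = c" using z_in z(3) by simp_all
qed

definition energy_factor :: "real \<Rightarrow> real" where
  "energy_factor q = 1 / (2 * q\<^sup>2 - 1) + 2 * ellK q / twoE_minus_K q"

lemma energy_factor_has_real_derivative:
  assumes q0: "0 < q" and q1: "q < 1" and D: "twoE_minus_K q \<noteq> 0" and h: "2 * q\<^sup>2 - 1 \<noteq> 0"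
  shows "(energy_factor has_real_derivative - 4 * f_aux q * (ellEc q - (1 - q\<^sup>2) * ellK q)
      / (q * (1 - q\<^sup>2) * (twoE_minus_K q)\<^sup>2 * (2 * q\<^sup>2 - 1)\<^sup>2)) (at q)"
proof -
  have "q\<^sup>2 < 1" using q0 q1 by (simp add: abs_square_less_1)
  then have k: "1 - q\<^sup>2 \<noteq> 0" by simp
  have h': "2 * q * q - 1 \<noteq> 0" using h by (simp add: power2_eq_square)
  have H_eq: "energy_factor = (\<lambda>q. 1 / (2 * q * q - 1) + 2 * ellK q / twoE_minus_K q)"
    unfolding energy_factor_def[abs_def] by (simp add: power2_eq_square mult.assoc)
  have dp: "((\<lambda>q. 2 * q * q - 1) has_real_derivative 4 * q) (at q)"
    by (auto intro!: derivative_eq_intros)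
  define a where "a = (ellEc q - ellK q) / q"
  define b where "b = (ellEc q - (1 - q\<^sup>2) * ellK q) / (q * (1 - q\<^sup>2))"
  have ha: "a * q = ellEc q - ellK q" unfolding a_def using q0 by simp
  have hb: "b * (q * (1 - q\<^sup>2)) = ellEc q - (1 - q\<^sup>2) * ellK q" unfolding b_def using q0 k by simp
  note dD = twoE_minus_K_has_real_derivative[OF q0 q1, folded a_def b_def]
  note d = DERIV_add[OF DERIV_divide[OF DERIV_const[of 1] dp h']
      DERIV_divide[OF DERIV_cmult[OF ellK_has_real_derivative[OF q0 q1, folded b_def], of 2] dD D]]
  have e1: "(0 * (2 * q * q - 1) - 1 * (4 * q)) / ((2 * q * q - 1) * (2 * q * q - 1))
      + (2 * b * twoE_minus_K q - 2 * ellK q * (2 * a - b)) / (twoE_minus_K q * twoE_minus_K q)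
    = (- 4 * q * (twoE_minus_K q * twoE_minus_K q) + (2 * b * twoE_minus_K q - 2 * ellK q * (2 * a - b))
        * ((2 * q * q - 1) * (2 * q * q - 1)))
      / (((2 * q * q - 1) * (2 * q * q - 1)) * (twoE_minus_K q * twoE_minus_K q))"
    using D h' by (subst add_frac_eq) auto
  have "(- 4 * q * (twoE_minus_K q * twoE_minus_K q) + (2 * b * twoE_minus_K q - 2 * ellK q * (2 * a - b))
        * ((2 * q * q - 1) * (2 * q * q - 1))) * (q * (1 - q\<^sup>2))
      = - 4 * f_aux q * (ellEc q - (1 - q\<^sup>2) * ellK q)"
    unfolding f_aux_def twoE_minus_K_def using ha hb by algebra
  then have e2: "- 4 * q * (twoE_minus_K q * twoE_minus_K q) + (2 * b * twoE_minus_K q - 2 * ellK q * (2 * a - b))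
        * ((2 * q * q - 1) * (2 * q * q - 1))
      = - 4 * f_aux q * (ellEc q - (1 - q\<^sup>2) * ellK q) / (q * (1 - q\<^sup>2))"
    using q0 k by (subst nonzero_eq_divide_eq) auto
  have "(0 * (2 * q * q - 1) - 1 * (4 * q)) / ((2 * q * q - 1) * (2 * q * q - 1))
      + (2 * b * twoE_minus_K q - 2 * ellK q * (2 * a - b)) / (twoE_minus_K q * twoE_minus_K q)
      = - 4 * f_aux q * (ellEc q - (1 - q\<^sup>2) * ellK q)
        / (q * (1 - q\<^sup>2) * (twoE_minus_K q)\<^sup>2 * (2 * q\<^sup>2 - 1)\<^sup>2)"
    unfolding e1 e2 by (simp add: power2_eq_square field_simps)
  then show ?thesis using d unfolding H_eq by simp
qed

lemma energy_factor_derivative_sign: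
  assumes q: "0 < q" "q < 1" and "twoE_minus_K q \<noteq> 0" "2 * q\<^sup>2 - 1 \<noteq> 0"
  shows "0 < f_aux q \<Longrightarrow> - 4 * f_aux q * (ellEc q - (1 - q\<^sup>2) * ellK q)
      / (q * (1 - q\<^sup>2) * (twoE_minus_K q)\<^sup>2 * (2 * q\<^sup>2 - 1)\<^sup>2) < 0"
    and "f_aux q < 0 \<Longrightarrow> 0 < - 4 * f_aux q * (ellEc q - (1 - q\<^sup>2) * ellK q)
      / (q * (1 - q\<^sup>2) * (twoE_minus_K q)\<^sup>2 * (2 * q\<^sup>2 - 1)\<^sup>2)"
proof -
  have w: "0 < (ellEc q - (1 - q\<^sup>2) * ellK q) / (q * (1 - q\<^sup>2) * (twoE_minus_K q)\<^sup>2 * (2 * q\<^sup>2 - 1)\<^sup>2)"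
    using assms one_minus_sq_mult_ellK_less_ellEc[OF q] by (simp add: abs_square_less_1)
  show "0 < f_aux q \<Longrightarrow> - 4 * f_aux q * (ellEc q - (1 - q\<^sup>2) * ellK q)
      / (q * (1 - q\<^sup>2) * (twoE_minus_K q)\<^sup>2 * (2 * q\<^sup>2 - 1)\<^sup>2) < 0"
    using mult_pos_pos[OF _ w, of "f_aux q"] by simp
  show "f_aux q < 0 \<Longrightarrow> 0 < - 4 * f_aux q * (ellEc q - (1 - q\<^sup>2) * ellK q)
      / (q * (1 - q\<^sup>2) * (twoE_minus_K q)\<^sup>2 * (2 * q\<^sup>2 - 1)\<^sup>2)"
    using mult_neg_pos[OF _ w, of "f_aux q"] by simp
qed

lemma energy_factor_strict_antimono_below_q_hat: "strict_antimono_on {1 / sqrt 2<..q_hat} energy_factor"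
proof (rule strict_antimono_on_if_has_real_derivative_neg[OF _ energy_factor_has_real_derivative])
  fix q assume q: "q \<in> {1 / sqrt 2<..q_hat}"
  then show "0 < q" "q < 1" using pos_if_inverse_sqrt2_le q_hat_less_1 by force+
  show "twoE_minus_K q \<noteq> 0" using q \<open>0 < q\<close> q_hat_less_q_star twoE_minus_K_pos[of q] by force
  show "2 * q\<^sup>2 - 1 \<noteq> 0" using q half_less_sq_if_inverse_sqrt2_less[of q] by force
next
  fix q assume "q \<in> interior {1 / sqrt 2<..q_hat}"
  then have q: "1 / sqrt 2 < q" "q < q_hat" by auto
  have q01: "0 < q" "q < 1" using q pos_if_inverse_sqrt2_le q_hat_less_1 by force+
  have "0 < twoE_minus_K q" using q q01 q_hat_less_q_star by (intro twoE_minus_K_pos) auto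
  moreover have "2 * q\<^sup>2 - 1 \<noteq> 0" using half_less_sq_if_inverse_sqrt2_less[OF q(1)] by simp
  moreover have "0 < f_aux q" using q by (intro f_aux_pos) auto
  ultimately show "- 4 * f_aux q * (ellEc q - (1 - q\<^sup>2) * ellK q)
      / (q * (1 - q\<^sup>2) * (twoE_minus_K q)\<^sup>2 * (2 * q\<^sup>2 - 1)\<^sup>2) < 0"
    using energy_factor_derivative_sign(1)[OF q01] by simp
qed simp

lemma energy_factor_strict_mono_between: "strict_mono_on {q_hat..<q_star} energy_factor"
proof (rule strict_mono_on_if_has_real_derivative_pos[OF _ energy_factor_has_real_derivative])
  fix q assume q: "q \<in> {q_hat..<q_star}"
  then show "0 < q" "q < 1" using q_hat_gt pos_if_inverse_sqrt2_le q_star_less_1 by force+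
  show "twoE_minus_K q \<noteq> 0" using q \<open>0 < q\<close> twoE_minus_K_pos[of q] by force
  show "2 * q\<^sup>2 - 1 \<noteq> 0" using q q_hat_gt half_less_sq_if_inverse_sqrt2_less[of q] by force
next
  fix q assume "q \<in> interior {q_hat..<q_star}"
  then have q: "q_hat < q" "q < q_star" by auto
  have q01: "0 < q" "q < 1" using q q_hat_gt pos_if_inverse_sqrt2_le q_star_less_1 by force+
  have "0 < twoE_minus_K q" using q q01 by (intro twoE_minus_K_pos) auto
  moreover have "2 * q\<^sup>2 - 1 \<noteq> 0" using half_less_sq_if_inverse_sqrt2_less[of q] q q_hat_gt by force
  moreover have "f_aux q < 0" using q q01 by (intro f_aux_neg) auto
  ultimately show "0 < - 4 * f_aux q * (ellEc q - (1 - q\<^sup>2) * ellK q)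
      / (q * (1 - q\<^sup>2) * (twoE_minus_K q)\<^sup>2 * (2 * q\<^sup>2 - 1)\<^sup>2)"
    using energy_factor_derivative_sign(2)[OF q01] by simp
qed simp

lemma energy_factor_strict_mono_above_q_star: "strict_mono_on {q_star<..<1} energy_factor"
proof (rule strict_mono_on_if_has_real_derivative_pos[OF _ energy_factor_has_real_derivative])
  fix q assume q: "q \<in> {q_star<..<1}"
  then show "0 < q" "q < 1" using q_star_gt pos_if_inverse_sqrt2_le by force+
  show "twoE_minus_K q \<noteq> 0" using q twoE_minus_K_neg[of q] by force
  show "2 * q\<^sup>2 - 1 \<noteq> 0" using q q_star_gt half_less_sq_if_inverse_sqrt2_less[of q] by force
next
  fix q assume "q \<in> interior {q_star<..<1}"
  then have q: "q_star < q" "q < 1" by auto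
  have q01: "0 < q" "q < 1" using q q_star_gt pos_if_inverse_sqrt2_le by force+
  have "twoE_minus_K q < 0" using q by (intro twoE_minus_K_neg) auto
  moreover have "2 * q\<^sup>2 - 1 \<noteq> 0" using half_less_sq_if_inverse_sqrt2_less[of q] q q_star_gt by force
  moreover have "f_aux q < 0" using q q_hat_less_q_star by (intro f_aux_neg) auto
  ultimately show "0 < - 4 * f_aux q * (ellEc q - (1 - q\<^sup>2) * ellK q)
      / (q * (1 - q\<^sup>2) * (twoE_minus_K q)\<^sup>2 * (2 * q\<^sup>2 - 1)\<^sup>2)"
    using energy_factor_derivative_sign(2)[OF q01] by simp
qed simp

lemma signed_arc_energy_eq_energy_factor:
  fixes q \<sigma> lam l :: real and n :: nat
  assumes q: "0 < q" "q < 1" and \<sigma>: "\<sigma>\<^sup>2 = 1" and D: "0 < \<sigma> * twoE_minus_K q"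
    and lam: "0 < lam" and l: "0 < l" and n: "0 < n" and g: "g_aux q = lam * l\<^sup>2 / (real n)\<^sup>2"
  shows "energy lam (\<lambda>s. \<sigma> * arc_x q (\<sigma> * arc_alpha l n q) s) (arc_y q (\<sigma> * arc_alpha l n q))
      (2 * real n * ellK q / (\<sigma> * arc_alpha l n q)) = \<sigma> * (lam * l * energy_factor q)"
proof -
  define \<alpha> where "\<alpha> = \<sigma> * arc_alpha l n q"
  define D where "D = twoE_minus_K q"
  define h where "h = 2 * q\<^sup>2 - 1"
  have \<alpha>_eq: "\<alpha> = 2 * real n / l * (\<sigma> * D)"
    unfolding \<alpha>_def D_def arc_alpha_def twoE_minus_K_def by simp
  have \<alpha>: "0 < \<alpha>" unfolding \<alpha>_eq using n l D unfolding D_def by simp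
  have "0 < g_aux q" unfolding g using lam l n by simp
  then have h0: "h \<noteq> 0" and D0: "D \<noteq> 0" unfolding g_aux_def h_def D_def twoE_minus_K_def by auto
  have lam_eq: "lam = 8 * D\<^sup>2 * h * (real n)\<^sup>2 / l\<^sup>2"
    using g n l unfolding g_aux_def D_def h_def twoE_minus_K_def by (simp add: field_simps)
  have "energy lam (\<lambda>s. \<sigma> * arc_x q \<alpha> s) (arc_y q \<alpha>) (2 * real n * ellK q / \<alpha>)
      = 8 * real n * \<alpha> * (ellEc q - (1 - q\<^sup>2) * ellK q) + lam * (2 * real n * ellK q / \<alpha>)"
    using q \<alpha> \<sigma> n by (intro signed_arc_energy) auto
  also have "\<dots> = \<sigma> * (8 * D * (real n)\<^sup>2 * (2 * (ellEc q - (1 - q\<^sup>2) * ellK q) + h * ellK q) / l)"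
    unfolding \<alpha>_eq lam_eq using n l D0 \<sigma> unfolding power2_eq_1_iff
    by (auto simp: field_simps power2_eq_square)
  also have "2 * (ellEc q - (1 - q\<^sup>2) * ellK q) + h * ellK q = D + 2 * h * ellK q"
    unfolding D_def h_def twoE_minus_K_def by (simp add: algebra_simps)
  also have "8 * D * (real n)\<^sup>2 * (D + 2 * h * ellK q) / l = lam * l * energy_factor q"
    unfolding lam_eq energy_factor_def D_def[symmetric] h_def[symmetric]
    using D0 h0 l by (simp add: field_simps power2_eq_square)
  finally show ?thesis unfolding \<alpha>_def .
qed

lemma energy_sarc_eq:
  assumes lam: "0 < lam" and l: "0 < l" and n: "0 < n" and c: "lam * l\<^sup>2 / (real n)\<^sup>2 \<le> lambda_hat"
  shows "energy_sarc lam l n = lam * l * energy_factor (sarc_q lam l n)"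
proof -
  define q where "q = sarc_q lam l n"
  have c0: "0 < lam * l\<^sup>2 / (real n)\<^sup>2" using lam l n by simp
  note q = q1[OF c0 c, folded sarc_q_def q_def]
  have q01: "0 < q" "q < 1" using q(1) pos_if_inverse_sqrt2_le q_hat_less_1 by force+
  have "0 < 1 * twoE_minus_K q" using q(1) q01 q_hat_less_q_star by (simp add: twoE_minus_K_pos)
  from signed_arc_energy_eq_energy_factor[OF q01 _ this lam l n q(2)] show ?thesis
    unfolding energy_sarc_def q_def[symmetric] by simp
qed

lemma energy_larc_eq:
  assumes lam: "0 < lam" and l: "0 < l" and n: "0 < n" and c: "lam * l\<^sup>2 / (real n)\<^sup>2 \<le> lambda_hat"
  shows "energy_larc lam l n = lam * l * energy_factor (larc_q lam l n)"
proof -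
  define q where "q = larc_q lam l n"
  have c0: "0 < lam * l\<^sup>2 / (real n)\<^sup>2" using lam l n by simp
  note q = q2[OF c0 c, folded larc_q_def q_def]
  have q01: "0 < q" "q < 1" using q(1) q_hat_gt pos_if_inverse_sqrt2_le q_star_less_1 by force+
  have "0 < 1 * twoE_minus_K q" using q(1) q01 by (simp add: twoE_minus_K_pos)
  from signed_arc_energy_eq_energy_factor[OF q01 _ this lam l n q(2)] show ?thesis
    unfolding energy_larc_def q_def[symmetric] by simp
qed

lemma energy_loop_eq:
  assumes lam: "0 < lam" and l: "0 < l" and n: "0 < n"
  shows "energy_loop lam l n = - (lam * l * energy_factor (loop_q lam l n))"
proof -
  define q where "q = loop_q lam l n"
  have c0: "0 < lam * l\<^sup>2 / (real n)\<^sup>2" using lam l n by simp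
  note q = q3[OF c0, folded loop_q_def q_def]
  have q01: "0 < q" "q < 1" using q(1) q_star_gt pos_if_inverse_sqrt2_le by force+
  have "0 < - 1 * twoE_minus_K q" using q(1) by (simp add: twoE_minus_K_neg)
  moreover have "loop_alpha l n q = - 1 * arc_alpha l n q"
    unfolding loop_alpha_def arc_alpha_def by (simp add: algebra_simps)
  ultimately show ?thesis
    using signed_arc_energy_eq_energy_factor[OF q01 _ _ lam l n q(2), of "- 1"]
    unfolding energy_loop_def q_def[symmetric] loop_x_eq_minus_arc_x by simp
qed

lemma le_lambda_hat_if_n_min_le:
  assumes lam: "0 < lam" and l: "0 < l" and n: "0 < n" and "n_min lam l \<le> int n"
  shows "lam * l\<^sup>2 / (real n)\<^sup>2 \<le> lambda_hat"
proof -
  have "sqrt (lam * l\<^sup>2 / lambda_hat) \<le> real n"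
    using assms(4) unfolding n_min_def by (simp add: ceiling_le_iff)
  then have "lam * l\<^sup>2 / lambda_hat \<le> (real n)\<^sup>2"
    using lam l lambda_hat_pos by (simp add: sqrt_le_D)
  then show ?thesis using lambda_hat_pos n by (simp add: field_simps)
qed

lemma scaled_inverse_square_less:
  fixes a :: real and n m :: nat
  assumes "0 < a" "0 < n" "n < m"
  shows "a / (real m)\<^sup>2 < a / (real n)\<^sup>2"
  using assms by (intro divide_strict_left_mono power_strict_mono) auto

lemma q1_less:
  assumes "0 < c" "c < c'" "c' \<le> lambda_hat"
  shows "q1 c < q1 c'"
proof -
  have c: "0 < c'" "c \<le> lambda_hat" using assms by auto
  have "q1 c \<in> {1 / sqrt 2..q_hat}" "q1 c' \<in> {1 / sqrt 2..q_hat}"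
    using q1(1)[OF assms(1) c(2)] q1(1)[OF c(1) assms(3)] by auto
  from strict_mono_on_less[OF g_aux_strict_mono_below_q_hat this] show ?thesis
    using q1(2)[OF assms(1) c(2)] q1(2)[OF c(1) assms(3)] assms(2) by simp
qed

lemma q2_less:
  assumes "0 < c" "c < c'" "c' \<le> lambda_hat"
  shows "q2 c' < q2 c"
proof -
  have c: "0 < c'" "c \<le> lambda_hat" using assms by auto
  have "q2 c \<in> {q_hat..q_star}" "q2 c' \<in> {q_hat..q_star}"
    using q2(1)[OF assms(1) c(2)] q2(1)[OF c(1) assms(3)] by auto
  then show ?thesis
    using monotone_onD[OF g_aux_strict_antimono_between, of "q2 c" "q2 c'"]
      q2(2)[OF assms(1) c(2)] q2(2)[OF c(1) assms(3)] assms(2)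
    by (cases "q2 c" "q2 c'" rule: linorder_cases) auto
qed

lemma q3_less:
  assumes "0 < c" "c < c'"
  shows "q3 c < q3 c'"
proof -
  have c: "0 < c'" using assms by auto
  have "q3 c \<in> {q_star..<1}" "q3 c' \<in> {q_star..<1}"
    using q3(1)[OF assms(1)] q3(1)[OF c] by auto
  from strict_mono_on_less[OF g_aux_strict_mono_above_q_star this] show ?thesis
    using q3(2)[OF assms(1)] q3(2)[OF c] assms(2) by simp
qed

lemma energy_sarc_strict_mono:
  assumes lam: "0 < lam" and l: "0 < l" and n: "0 < n" and nmin: "n_min lam l \<le> int n" and nm: "n < m"
  shows "energy_sarc lam l n < energy_sarc lam l m"
proof -
  have m: "0 < m" and mmin: "n_min lam l \<le> int m" using n nmin nm by simp_all
  have c: "lam * l\<^sup>2 / (real m)\<^sup>2 < lam * l\<^sup>2 / (real n)\<^sup>2"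
    using lam l n nm by (intro scaled_inverse_square_less) auto
  have c0: "0 < lam * l\<^sup>2 / (real m)\<^sup>2" using lam l m by simp
  note cn = le_lambda_hat_if_n_min_le[OF lam l n nmin] and cm = le_lambda_hat_if_n_min_le[OF lam l m mmin]
  have "sarc_q lam l m < sarc_q lam l n" unfolding sarc_q_def by (rule q1_less[OF c0 c cn])
  then have "energy_factor (sarc_q lam l n) < energy_factor (sarc_q lam l m)"
    using monotone_onD[OF energy_factor_strict_antimono_below_q_hat] q1(1)[OF c0 cm] q1(1)[OF _ cn] c0 c
    unfolding sarc_q_def by auto
  then show ?thesis using lam l by (simp add: energy_sarc_eq[OF lam l n cn] energy_sarc_eq[OF lam l m cm])
qed

lemma energy_larc_strict_mono:
  assumes lam: "0 < lam" and l: "0 < l" and n: "0 < n" and nmin: "n_min lam l \<le> int n" and nm: "n < m"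
  shows "energy_larc lam l n < energy_larc lam l m"
proof -
  have m: "0 < m" and mmin: "n_min lam l \<le> int m" using n nmin nm by simp_all
  have c: "lam * l\<^sup>2 / (real m)\<^sup>2 < lam * l\<^sup>2 / (real n)\<^sup>2"
    using lam l n nm by (intro scaled_inverse_square_less) auto
  have c0: "0 < lam * l\<^sup>2 / (real m)\<^sup>2" using lam l m by simp
  note cn = le_lambda_hat_if_n_min_le[OF lam l n nmin] and cm = le_lambda_hat_if_n_min_le[OF lam l m mmin]
  have "larc_q lam l n < larc_q lam l m" unfolding larc_q_def by (rule q2_less[OF c0 c cn])
  then have "energy_factor (larc_q lam l n) < energy_factor (larc_q lam l m)"
    using monotone_onD[OF energy_factor_strict_mono_between] q2(1)[OF c0 cm] q2(1)[OF _ cn] c0 c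
    unfolding larc_q_def by auto
  then show ?thesis using lam l by (simp add: energy_larc_eq[OF lam l n cn] energy_larc_eq[OF lam l m cm])
qed

lemma energy_loop_strict_mono:
  assumes lam: "0 < lam" and l: "0 < l" and n: "0 < n" and nm: "n < m"
  shows "energy_loop lam l n < energy_loop lam l m"
proof -
  have m: "0 < m" using n nm by simp
  have c: "lam * l\<^sup>2 / (real m)\<^sup>2 < lam * l\<^sup>2 / (real n)\<^sup>2"
    using lam l n nm by (intro scaled_inverse_square_less) auto
  have c0: "0 < lam * l\<^sup>2 / (real m)\<^sup>2" using lam l m by simp
  have "loop_q lam l m < loop_q lam l n" unfolding loop_q_def by (rule q3_less[OF c0 c])
  then have "energy_factor (loop_q lam l m) < energy_factor (loop_q lam l n)"
    using monotone_onD[OF energy_factor_strict_mono_above_q_star] q3(1)[OF c0] q3(1)[OF order.strict_trans[OF c0 c]]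
    unfolding loop_q_def by auto
  then show ?thesis using lam l by (simp add: energy_loop_eq[OF lam l n] energy_loop_eq[OF lam l m])
qed

theorem lemma4p4:
  fixes lam l :: real and n m :: nat
  assumes "lam > 0" and "l > 0" and "0 < n" and "n < m"
  shows "(n_min lam l \<le> int n \<longrightarrow>
            energy_sarc lam l n < energy_sarc lam l m \<and>
            energy_larc lam l n < energy_larc lam l m)
         \<and> energy_loop lam l n < energy_loop lam l m"
  using energy_sarc_strict_mono[OF assms(1-3) _ assms(4)] energy_larc_strict_mono[OF assms(1-3) _ assms(4)]
    energy_loop_strict_mono[OF assms] by blast

end
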